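(* Let $q\in(0,1)$ and consider an SC6V model on a skew domain $P-Q$. Let $\mathcal A=(\alpha_1,\dots,\alpha_k)$, $\mathcal B=(\beta_1,\dots,\beta_k)\in(\mathbb{Z}+\frac12)^k$ and $\mathbf c=(c_1,\dots,c_k)\in\mathbb{Z}^k$ satisfy, for some $r,t\ge1$, $$\alpha_1\le\dots\le\alpha_{r-1}<\alpha=\alpha_r=\dots=\alpha_{r+t-1}<\alpha_{r+t}\le\dots\le\alpha_k,$$ $$\beta_1\ge\dots\ge\beta_{r-1}>\beta=\beta_r=\dots=\beta_{r+t-1}>\beta_{r+t}\ge\dots\ge\beta_k,\qquad c_1\le\dots\le c_k.$$ Assume all points $(\alpha_i,\beta_i)$ lie in the region $P-Q$, as does the vertex $v=(\alpha-\frac12,\beta-\frac12)$, and let $z$ be the spectral parameter of $v$. Then for every $[r,r+t-1]$-ordered permutation $\pi\in S_k$, $$q^{l(\pi)}\mathbb E\big[q^{\mathcal H^{(\mathcal A,\mathcal B)}_{\pi.\mathbf c}}\big]=\frac{q-q^tz}{q-z}q^{l(\pi)}\mathbb E\big[q^{\mathcal H^{(\mathcal A,\mathcal B-\mathbf e^{[r,r+t-1]})}_{\pi.\mathbf c}}\big]+\sum_{i=0}^{t-1}\frac{qz-1}{q-z}q^{l(\sigma^+_{[r,r+i]}\pi)}\mathbb E\big[q^{\mathcal H^{(\mathcal A-\mathbf e^r,\mathcal B-\mathbf e^{[r,r+t-1]})}_{\sigma^+_{[r,r+i]}\pi.\mathbf c}}\big]+\sum_{i=0}^{t-1}\frac{1-z}{q-z}q^{l(\sigma^+_{[r,r+i]}\pi)}\mathbb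 E\big[q^{\mathcal H^{(\mathcal A-\mathbf e^r,\mathcal B-\mathbf e^{[r+1,r+t-1]})}_{\sigma^+_{[r,r+i]}\pi.\mathbf c}}\big].$$
   Context: SC6V weights: colors $\{0,\dots,n\}$ ($0$ = no path); a vertex with incoming bottom $i$, left $j$, outgoing top $k$, right $l$ has weight $R_z(i,j;k,l)$ where, for $0\le i<j\le n$: $R_z(i,i;i,i)=1$, $R_z(j,i;j,i)=\frac{q(z-1)}{z-q}$, $R_z(j,i;i,j)=\frac{z(1-q)}{z-q}$, $R_z(i,j;i,j)=\frac{z-1}{z-q}$, $R_z(i,j;j,i)=\frac{1-q}{z-q}$, others $0$. Setting: lattice vertices $(a,b)$ ($a$ column, $b$ row), dual points in $(\mathbb{Z}+\frac12)^2$. $Q\le P$ are up-left paths (steps $(-1,0)$ or $(0,+1)$) with common endpoints, $Q$ weakly down-left of $P$; $P-Q$ is the set of lattice vertices between them with adjacent edges. Incoming edges (crossing steps of $Q$) are colored by a weakly increasing coloring of the steps of $Q$ (from its first point $Q_0$). Each row and column has a rapidity; a vertex's spectral parameter is (row rapidity)/(column rapidity). The model is the (possibly complex-valued) probability measure on configurations with weight the product of vertex weights. Height function: $h^{Q_0}_{>c}=0$; if the edge separating $(\alpha,\beta),(\alpha+1,\beta)$ has color $i$, $h^{(\alpha+1,\beta)}_{>c}=h^{(\alpha,\beta)}_{>c}-\mathbb 1_{i>c}$; if the edge separating $(\alpha,\beta),(\alpha,\beta+1)$ has color $i$, $h^{(\alpha,\beta+1)}_{>c}=h^{(\alpha,\beta)}_{>c}+\mathbb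 1_{i>c}$. Notation: $\mathcal H^{(\mathcal A,\mathcal B)}_{(d_1,\dots,d_k)}=\sum_{i=1}^kh^{(\alpha_i,\beta_i)}_{>d_i}$. For $\pi\in S_k$, $\pi.(d_1,\dots,d_k)=(d_{\pi^{-1}(1)},\dots,d_{\pi^{-1}(k)})$; products of permutations are compositions. $\sigma_i$ is the transposition of $i,i+1$; $l(\pi)$ is the length (minimal number of $\sigma_i$'s). $\sigma^+_{[a,b]}=\sigma_a\sigma_{a+1}\cdots\sigma_{b-1}$ ($=\mathrm{id}$ if $a=b$). $\pi$ is $[a,b]$-ordered if $\pi^{-1}(i)<\pi^{-1}(j)$ for all $a\le i<j\le b$. $\mathbf e^i$ is the $i$-th standard basis vector of $\mathbb{Z}^k$ and $\mathbf e^{[a,b]}=\sum_{i=a}^b\mathbf e^i$ ($=0$ if $a>b$). *)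

theory Defs
  imports Complex_Main "HOL-Combinatorics.Permutations"
begin

(* Lattice vertices are integer points (x,y) (x = column, y = row).
   A dual point (alpha,beta) in (Z+1/2)^2 is encoded by the integer pair
   (a,b) with alpha = a + 1/2, beta = b + 1/2; i.e. a "face" is named by
   its lower-left lattice vertex.  Hence the vertex (alpha-1/2, beta-1/2)
   is the integer pair (a,b) itself.
   ------------------------------------------------------------------- *)

(* VE x y : vertical lattice edge from vertex (x,y) to (x,y+1)
   HE x y : horizontal lattice edge from vertex (x,y) to (x+1,y) *)
datatype edge = VE int int | HE int int

(* SC6V vertex weight R_z(i,j;k,l): bottom-in i, left-in j, top-out k, right-out l *)
definition R :: "complex \<Rightarrow> complex \<Rightarrow> nat \<Rightarrow> nat \<Rightarrow> nat \<Rightarrow> nat \<Rightarrow> complex" where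
  "R z q i j k l =
     (if i = j \<and> k = i \<and> l = i then 1
      else if j < i \<and> k = i \<and> l = j then q * (z - 1) / (z - q)
      else if j < i \<and> k = j \<and> l = i then z * (1 - q) / (z - q)
      else if i < j \<and> k = i \<and> l = j then (z - 1) / (z - q)
      else if i < j \<and> k = j \<and> l = i then (1 - q) / (z - q)
      else 0)"

definition up_left_path :: "(int \<times> int) list \<Rightarrow> bool" where
  "up_left_path L \<longleftrightarrow> L \<noteq> [] \<and>
     (\<forall>j. Suc j < length L \<longrightarrow>
        (fst (L ! Suc j) = fst (L ! j) - 1 \<and> snd (L ! Suc j) = snd (L ! j)) \<or>
        (fst (L ! Suc j) = fst (L ! j) \<and> snd (L ! Suc j) = snd (L ! j) + 1))"

definition col_hi :: "(int \<times> int) list \<Rightarrow> int \<Rightarrow> int" where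
  "col_hi L a = Max {y. (a, y) \<in> set L}"

definition col_lo :: "(int \<times> int) list \<Rightarrow> int \<Rightarrow> int" where
  "col_lo L a = Min {y. (a, y) \<in> set L}"

definition skew_domain :: "(int \<times> int) list \<Rightarrow> (int \<times> int) list \<Rightarrow> bool" where
  "skew_domain P Q \<longleftrightarrow> up_left_path P \<and> up_left_path Q \<and>
     hd P = hd Q \<and> last P = last Q \<and>
     (\<forall>a. fst (last Q) \<le> a \<and> a \<le> fst (hd Q) \<longrightarrow> col_hi Q a \<le> col_hi P a)"

(* the lattice edge crossed by the j-th step of a path (from L!j to L!(j+1)) *)
definition step_edge :: "(int \<times> int) list \<Rightarrow> nat \<Rightarrow> edge" where
  "step_edge L j =
     (if snd (L ! Suc j) = snd (L ! j) then VE (fst (L ! j)) (snd (L ! j))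
      else HE (fst (L ! j)) (snd (L ! j) + 1))"

definition region_vertices :: "(int \<times> int) list \<Rightarrow> (int \<times> int) list \<Rightarrow> (int \<times> int) set" where
  "region_vertices P Q = {(x, y). fst (last Q) < x \<and> x \<le> fst (hd Q) \<and>
                                   col_hi Q x < y \<and> y \<le> col_hi P x}"

definition region_faces :: "(int \<times> int) list \<Rightarrow> (int \<times> int) list \<Rightarrow> (int \<times> int) set" where
  "region_faces P Q = {(a, b). fst (last Q) \<le> a \<and> a \<le> fst (hd Q) \<and>
                                col_lo Q a \<le> b \<and> b \<le> col_hi P a}"

definition vertex_edges :: "int \<times> int \<Rightarrow> edge set" where
  "vertex_edges v = {VE (fst v) (snd v - 1), HE (fst v - 1) (snd v), VE (fst v) (snd v), HE (fst v) (snd v)}"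

definition model_edges :: "(int \<times> int) list \<Rightarrow> (int \<times> int) list \<Rightarrow> edge set" where
  "model_edges P Q = (\<Union>v\<in>region_vertices P Q. vertex_edges v) \<union>
                     {step_edge Q j | j. Suc j < length Q}"

definition configs :: "nat \<Rightarrow> (int \<times> int) list \<Rightarrow> (int \<times> int) list \<Rightarrow> (nat \<Rightarrow> nat) \<Rightarrow> (edge \<Rightarrow> nat) set" where
  "configs n P Q bc = {cfg. (\<forall>e. e \<notin> model_edges P Q \<longrightarrow> cfg e = 0) \<and>
                            (\<forall>e\<in>model_edges P Q. cfg e \<le> n) \<and>
                            (\<forall>j. Suc j < length Q \<longrightarrow> cfg (step_edge Q j) = bc j)}"

(* weight of a configuration: product of vertex weights; the spectral parameter of
   vertex (x,y) is (row rapidity u y) / (column rapidity w x) *)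
definition cfg_weight :: "real \<Rightarrow> (int \<Rightarrow> complex) \<Rightarrow> (int \<Rightarrow> complex) \<Rightarrow>
    (int \<times> int) list \<Rightarrow> (int \<times> int) list \<Rightarrow> (edge \<Rightarrow> nat) \<Rightarrow> complex" where
  "cfg_weight q u w P Q cfg =
     (\<Prod>v\<in>region_vertices P Q.
        R (u (snd v) / w (fst v)) (complex_of_real q)
          (cfg (VE (fst v) (snd v - 1))) (cfg (HE (fst v - 1) (snd v)))
          (cfg (VE (fst v) (snd v))) (cfg (HE (fst v) (snd v))))"

definition sc6v_expect :: "nat \<Rightarrow> real \<Rightarrow> (int \<Rightarrow> complex) \<Rightarrow> (int \<Rightarrow> complex) \<Rightarrow>
    (int \<times> int) list \<Rightarrow> (int \<times> int) list \<Rightarrow> (nat \<Rightarrow> nat) \<Rightarrow> ((edge \<Rightarrow> nat) \<Rightarrow> complex) \<Rightarrow> complex" where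
  "sc6v_expect n q u w P Q bc F = (\<Sum>cfg\<in>configs n P Q bc. cfg_weight q u w P Q cfg * F cfg)"

(* height function h^{(a,b)}_{>c}: h^{Q_0} = 0, computed by walking along Q from Q_0
   (each crossed step of Q contributes 1_{colour > c}) until the lowest point
   (a, col_lo Q a) of Q in column a, then walking straight up to (a,b) (each
   crossed horizontal edge HE a (y+1) contributes 1_{colour > c}).  This is the
   path-summation of the defining relations of the height function. *)
definition height :: "(int \<times> int) list \<Rightarrow> (nat \<Rightarrow> nat) \<Rightarrow> (edge \<Rightarrow> nat) \<Rightarrow> int \<times> int \<Rightarrow> int \<Rightarrow> nat" where
  "height Q bc cfg p c =
     card {j. Suc j < length Q \<and> fst p < fst (Q ! j) \<and> c < int (bc j)} +
     card {y. col_lo Q (fst p) \<le> y \<and> y < snd p \<and> c < int (cfg (HE (fst p) (y + 1)))}"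

definition HH :: "(int \<times> int) list \<Rightarrow> (nat \<Rightarrow> nat) \<Rightarrow> (edge \<Rightarrow> nat) \<Rightarrow> nat \<Rightarrow>
    (nat \<Rightarrow> int) \<Rightarrow> (nat \<Rightarrow> int) \<Rightarrow> (nat \<Rightarrow> int) \<Rightarrow> nat" where
  "HH Q bc cfg k A B d = (\<Sum>i=1..k. height Q bc cfg (A i, B i) (d i))"

definition EqH :: "nat \<Rightarrow> real \<Rightarrow> (int \<Rightarrow> complex) \<Rightarrow> (int \<Rightarrow> complex) \<Rightarrow>
    (int \<times> int) list \<Rightarrow> (int \<times> int) list \<Rightarrow> (nat \<Rightarrow> nat) \<Rightarrow> nat \<Rightarrow>
    (nat \<Rightarrow> int) \<Rightarrow> (nat \<Rightarrow> int) \<Rightarrow> (nat \<Rightarrow> int) \<Rightarrow> complex" where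
  "EqH n q u w P Q bc k A B d =
     sc6v_expect n q u w P Q bc (\<lambda>cfg. complex_of_real q ^ HH Q bc cfg k A B d)"

definition perm_act :: "(nat \<Rightarrow> nat) \<Rightarrow> (nat \<Rightarrow> 'a) \<Rightarrow> nat \<Rightarrow> 'a" where
  "perm_act \<pi> d = (\<lambda>i. d (inv \<pi> i))"

definition sig :: "nat \<Rightarrow> nat \<Rightarrow> nat" where
  "sig i = Transposition.transpose i (Suc i)"

definition perm_length :: "nat \<Rightarrow> (nat \<Rightarrow> nat) \<Rightarrow> nat" where
  "perm_length k \<pi> = (LEAST m. \<exists>xs. length xs = m \<and> set xs \<subseteq> {1..<k} \<and>
                                     \<pi> = foldr (\<lambda>i f. sig i \<circ> f) xs id)"

fun sigma_plus :: "nat \<Rightarrow> nat \<Rightarrow> nat \<Rightarrow> nat" where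
  "sigma_plus a b = (if b \<le> a then id else sigma_plus a (b - 1) \<circ> sig (b - 1))"

definition ordered_on :: "nat \<Rightarrow> nat \<Rightarrow> (nat \<Rightarrow> nat) \<Rightarrow> bool" where
  "ordered_on a b \<pi> \<longleftrightarrow> (\<forall>i j. a \<le> i \<and> i < j \<and> j \<le> b \<longrightarrow> inv \<pi> i < inv \<pi> j)"

definition ebox :: "nat \<Rightarrow> nat \<Rightarrow> nat \<Rightarrow> int" where
  "ebox a b i = (if a \<le> i \<and> i \<le> b then 1 else 0)"

end

theory Submission
  imports Defs
begin

text \<open>
  Write \<open>(a, b)\<close> both for the vertex \<open>v\<close> and for the face \<open>(\<alpha>, \<beta>)\<close> to its upper right (faces are
  named by their lower left corner). All points of the block sit at this face, all other points
  lie strictly left of or strictly below \<open>v\<close>, where the heights do not see the edges at \<open>v\<close>. The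
  heights at the faces around \<open>v\<close> exceed the height at its lower right face by the indicators
  \<open>1[colour > threshold]\<close> of the right outgoing edge (upper right face), of the bottom incoming
  edge (lower left face), and of both incoming edges (upper left face). The bottom edge enters
  through colour conservation along the column below \<open>v\<close>, since heights are defined by summing
  along \<open>Q\<close> and then up a column. Counting inversions, the prefactor \<open>q ^ l(\<sigma>\<^sup>+ \<pi>)\<close> of the
  \<open>i\<close>-th summand is \<open>q ^ (l(\<pi>) + i)\<close>.

  Now group the configurations by their colours off the outgoing edges of the vertices weakly
  up-right of \<open>v\<close>. Summing over the colours of those edges, the vertices other than \<open>v\<close> are
  stochastic and contribute \<open>1\<close>, so each group contributes a multiple of
  \<open>\<Sum>k l. R z (i, j; k, l) F l\<close>, where \<open>i, j\<close> are the incoming colours at \<open>v\<close> and \<open>F l\<close> is the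
  difference of the two sides. After evaluating the geometric sums in \<open>F\<close>, this vanishes by a
  rational identity in \<open>q\<close> and \<open>z\<close>, separately for \<open>i = j\<close>, \<open>i > j\<close> and \<open>i < j\<close>.
\<close>

section \<open>The relation at a single vertex\<close>

text \<open>The contribution of an edge of colour \<open>v\<close> to a height function \<open>h\<^sub>>\<^sub>c\<close>.\<close>

abbreviation exceeds :: "int \<Rightarrow> nat \<Rightarrow> nat" where
  "exceeds c v \<equiv> of_bool (c < int v)"

definition count_below :: "nat \<Rightarrow> (nat \<Rightarrow> int) \<Rightarrow> nat \<Rightarrow> nat" where
  "count_below t d l = card {m. m < t \<and> d m < int l}"

lemma count_below_le: "count_below t d l \<le> t"
  unfolding count_below_def by (rule card_mono[of "{..<t}", simplified]) auto

lemma count_below_mono: "l \<le> l' \<Longrightarrow> count_below t d l \<le> count_below t d l'"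
  unfolding count_below_def by (rule card_mono) auto

lemma sorted_exceeds_eq_less_count_below:
  assumes sorted: "\<And>i j. i \<le> j \<Longrightarrow> j < t \<Longrightarrow> d i \<le> d j" and "m < t"
  shows "exceeds (d m) l = of_bool (m < count_below t d l)"
proof -
  have "d m < int l \<longleftrightarrow> m < count_below t d l"
  proof
    assume "d m < int l"
    then have "{..m} \<subseteq> {m. m < t \<and> d m < int l}"
      using sorted[of _ m] \<open>m < t\<close> by fastforce
    then have "card {..m} \<le> count_below t d l"
      unfolding count_below_def by (rule card_mono[rotated]) simp
    then show "m < count_below t d l" by simp
  next
    assume less: "m < count_below t d l"
    show "d m < int l"
    proof (rule ccontr)
      assume "\<not> d m < int l"
      then have "{m. m < t \<and> d m < int l} \<subseteq> {..<m}"
        using sorted[of m] by (auto simp: not_less) (meson le_less_trans not_le)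
      then have "count_below t d l \<le> card {..<m}"
        unfolding count_below_def by (rule card_mono[rotated]) simp
      with less show False by simp
    qed
  qed
  then show ?thesis by simp
qed

lemma sum_power_times_power_indicators:
  fixes q :: "'a::comm_ring_1"
  assumes "N \<le> N'" "N' \<le> t"
  shows "(\<Sum>m<t. q ^ m * q ^ (of_bool (m < N) + of_bool (m < N')))
       = (\<Sum>m<t. q ^ m) + (q ^ N' - 1) + q * (q ^ N - 1)"
proof -
  have split: "q ^ m * q ^ (of_bool (m < N) + of_bool (m < N'))
      = q ^ m + (q - 1) * q ^ m * of_bool (m < N') + q * ((q - 1) * q ^ m) * of_bool (m < N)" for m
    using assms by (auto simp: algebra_simps power_add)
  have "{..<t} \<inter> {m. m < N'} = {..<N'}" "{..<t} \<inter> {m. m < N} = {..<N}"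
    using assms by auto
  then have "(\<Sum>m<t. q ^ m * q ^ (of_bool (m < N) + of_bool (m < N')))
      = (\<Sum>m<t. q ^ m) + (\<Sum>m<N'. (q - 1) * q ^ m) + (\<Sum>m<N. q * ((q - 1) * q ^ m))"
    unfolding split sum.distrib by simp
  then show ?thesis
    by (simp only: power_diff_1_eq flip: sum_distrib_left)
qed

lemma R_nonzero_imp_outputs: "R z q i j k l \<noteq> 0 \<Longrightarrow> (k = i \<and> l = j) \<or> (k = j \<and> l = i)"
  unfolding R_def by (auto split: if_splits)

lemma R_conserves_colours_above:
  "R z q i j k l \<noteq> 0 \<Longrightarrow> exceeds c i + exceeds c j = exceeds c k + exceeds c l"
  using R_nonzero_imp_outputs[of z q i j k l] by auto

lemma sum_R_outputs:
  assumes "i \<le> n" "j \<le> n"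
  shows "(\<Sum>k\<le>n. \<Sum>l\<le>n. R z q i j k l * f k l) =
    (if i = j then f i i else R z q i j i j * f i j + R z q i j j i * f j i)"
proof -
  have "(\<Sum>k\<le>n. \<Sum>l\<le>n. R z q i j k l * f k l) = (\<Sum>(k, l)\<in>{..n} \<times> {..n}. R z q i j k l * f k l)"
    by (simp add: sum.cartesian_product)
  also have "\<dots> = (\<Sum>(k, l)\<in>{(i, j), (j, i)}. R z q i j k l * f k l)"
    by (rule sum.mono_neutral_right) (use assms in \<open>auto dest: R_nonzero_imp_outputs\<close>)
  also have "\<dots> = (if i = j then f i i else R z q i j i j * f i j + R z q i j j i * f j i)"
    by (simp add: R_def)
  finally show ?thesis .
qed

lemma R_stochastic:
  assumes "z \<noteq> q" "i \<le> n" "j \<le> n"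
  shows "(\<Sum>k\<le>n. \<Sum>l\<le>n. R z q i j k l) = 1"
proof -
  have "z - q \<noteq> 0" using assms(1) by simp
  then have "i \<noteq> j \<Longrightarrow> R z q i j i j + R z q i j j i = 1"
    by (cases "i < j") (simp_all add: R_def algebra_simps flip: add_divide_distrib)
  then show ?thesis
    using sum_R_outputs[OF assms(2,3), of z q "\<lambda>_ _. 1"] by (simp add: R_def)
qed

lemma sum_power_times_power_indicators_max_min:
  fixes q :: "'a::comm_ring_1"
  assumes "N \<le> t" "N' \<le> t"
  shows "(\<Sum>m<t. q ^ m * q ^ (of_bool (m < N) + of_bool (m < N')))
       = (\<Sum>m<t. q ^ m) + (q ^ max N N' - 1) + q * (q ^ min N N' - 1)"
proof (cases "N \<le> N'")
  case True
  then show ?thesis using sum_power_times_power_indicators[OF True assms(2)] by simp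
next
  case False
  then show ?thesis
    using sum_power_times_power_indicators[of N' N t q] assms(1) by (simp add: add.commute)
qed

lemma vertex_rational_identities:
  fixes q z qt x y :: "'a::field"
  assumes "z \<noteq> q" "q \<noteq> 1"
  defines "D \<equiv> \<lambda>c a hi lo. c - (q - qt * z) / (q - z)
      - (q * z - 1) / (q - z) * ((qt - 1) / (q - 1) + a - 1)
      - (1 - z) / (q - z) * ((qt - 1) / (q - 1) + hi - 1 + q * (lo - 1))"
  shows "D x x x x = 0"
    and "q * (z - 1) / (z - q) * D y x x y + z * (1 - q) / (z - q) * D x x x y = 0"
    and "(z - 1) / (z - q) * D y x y x + (1 - q) / (z - q) * D x x y x = 0"
proof -
  obtain c where c: "z = q - c" "c \<noteq> 0" using assms(1) by (intro that[of "q - z"]) auto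
  obtain e where e: "q = e + 1" "e \<noteq> 0" using assms(2) by (intro that[of "q - 1"]) auto
  show "D x x x x = 0"
    and "q * (z - 1) / (z - q) * D y x x y + z * (1 - q) / (z - q) * D x x x y = 0"
    and "(z - 1) / (z - q) * D y x y x + (1 - q) / (z - q) * D x x y x = 0"
    unfolding D_def c(1) e(1) using c(2) e(2) by (simp_all add: field_simps)
qed

text \<open>For thresholds \<open>d 0 \<le> \<dots> \<le> d (t - 1)\<close> of the block and the colours \<open>i\<close> (bottom, in),
  \<open>j\<close> (left, in) and \<open>l\<close> (right, out) at the vertex \<open>v\<close>, this is the difference of the two sides
  of the identity for a single configuration, divided by the factor common to all its terms.\<close>

definition vertex_defect :: "complex \<Rightarrow> complex \<Rightarrow> nat \<Rightarrow> (nat \<Rightarrow> int) \<Rightarrow> nat \<Rightarrow> nat \<Rightarrow> nat \<Rightarrow> complex" where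
  "vertex_defect q z t d i j l =
     q ^ count_below t d l - (q - q ^ t * z) / (q - z)
     - (\<Sum>m<t. (q * z - 1) / (q - z) * (q ^ m * q ^ exceeds (d m) i))
     - (\<Sum>m<t. (1 - z) / (q - z) * (q ^ m * q ^ (exceeds (d m) i + exceeds (d m) j)))"

lemma vertex_defect_closed_form:
  assumes sorted: "\<And>a b. a \<le> b \<Longrightarrow> b < t \<Longrightarrow> d a \<le> d b" and "q \<noteq> 1"
  defines "N \<equiv> \<lambda>x. q ^ count_below t d x"
  shows "vertex_defect q z t d i j l = N l - (q - q ^ t * z) / (q - z)
      - (q * z - 1) / (q - z) * ((q ^ t - 1) / (q - 1) + N i - 1)
      - (1 - z) / (q - z) * ((q ^ t - 1) / (q - 1) + N (max i j) - 1 + q * (N (min i j) - 1))"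
proof -
  note below = sorted_exceeds_eq_less_count_below[of t d, OF sorted]
  have geometric: "(\<Sum>m<t. q ^ m) = (q ^ t - 1) / (q - 1)"
    using geometric_sum[OF \<open>q \<noteq> 1\<close>] .
  have one: "(\<Sum>m<t. q ^ m * q ^ exceeds (d m) i) = (q ^ t - 1) / (q - 1) + N i - 1"
  proof -
    have "(\<Sum>m<t. q ^ m * q ^ exceeds (d m) i)
        = (\<Sum>m<t. q ^ m * q ^ (of_bool (m < 0) + of_bool (m < count_below t d i)))"
      using below by (intro sum.cong) simp_all
    then show ?thesis
      using sum_power_times_power_indicators[where q = q, OF le0 count_below_le]
      by (simp add: N_def geometric)
  qed
  have two: "(\<Sum>m<t. q ^ m * q ^ (exceeds (d m) i + exceeds (d m) j))
      = (q ^ t - 1) / (q - 1) + N (max i j) - 1 + q * (N (min i j) - 1)"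
  proof -
    have "(\<Sum>m<t. q ^ m * q ^ (exceeds (d m) i + exceeds (d m) j))
        = (\<Sum>m<t. q ^ m * q ^ (of_bool (m < count_below t d i) + of_bool (m < count_below t d j)))"
      using below by (intro sum.cong) simp_all
    moreover have "max (count_below t d i) (count_below t d j) = count_below t d (max i j)"
      "min (count_below t d i) (count_below t d j) = count_below t d (min i j)"
      using count_below_mono[of i j t d] count_below_mono[of j i t d] by (auto simp: max_def min_def)
    ultimately show ?thesis
      using sum_power_times_power_indicators_max_min[where q = q, OF count_below_le count_below_le]
      by (simp add: N_def geometric)
  qed
  have "q ^ count_below t d l = N l" by (simp add: N_def)
  then show ?thesis
    unfolding vertex_defect_def by (simp only: one two flip: sum_distrib_left)
qed

lemma sum_R_vertex_defect:
  assumes sorted: "\<And>a b. a \<le> b \<Longrightarrow> b < t \<Longrightarrow> d a \<le> d b"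
    and "z \<noteq> q" "q \<noteq> 1" "i \<le> n" "j \<le> n"
  shows "(\<Sum>k\<le>n. \<Sum>l\<le>n. R z q i j k l * vertex_defect q z t d i j l) = 0"
proof -
  note closed = vertex_defect_closed_form[OF sorted \<open>q \<noteq> 1\<close>]
  note identities = vertex_rational_identities[OF \<open>z \<noteq> q\<close> \<open>q \<noteq> 1\<close>, where qt = "q ^ t"]
  note outputs = sum_R_outputs[OF assms(4,5), of z q "\<lambda>_ l. vertex_defect q z t d i j l"]
  let ?x = "q ^ count_below t d i" and ?y = "q ^ count_below t d j"
  consider "i = j" | "j < i" | "i < j" by linarith
  then show ?thesis
  proof cases
    case 1
    show ?thesis
      unfolding outputs using 1 identities(1)[of ?x] by (simp add: closed)
  next
    case 2
    show ?thesis
      unfolding outputs using 2 identities(2)[of ?y ?x] by (simp add: closed R_def)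
  next
    case 3
    show ?thesis
      unfolding outputs using 3 identities(3)[of ?y ?x] by (simp add: closed R_def)
  qed
qed

section \<open>Lengths of permutations\<close>

lemma sig_permutes: "1 \<le> j \<Longrightarrow> j < k \<Longrightarrow> sig j permutes {1..k}"
  unfolding sig_def by (rule permutes_swap_id) auto

lemma sig_sig [simp]: "sig j (sig j x) = x"
  by (simp add: sig_def)

lemma inv_sig_comp:
  assumes "f permutes {1..k}" "1 \<le> j" "j < k"
  shows "inv (sig j \<circ> f) = inv f \<circ> sig j"
  using o_inv_distrib[OF permutes_bij[OF sig_permutes[OF assms(2,3)]] permutes_bij[OF assms(1)]]
  by (simp add: sig_def)

lemma permutes_inv_Suc_neq: "f permutes S \<Longrightarrow> inv f j \<noteq> inv f (Suc j)"
  by (metis n_not_Suc_n permutes_inverses(1))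

definition inversions :: "nat \<Rightarrow> (nat \<Rightarrow> nat) \<Rightarrow> (nat \<times> nat) set" where
  "inversions k f = {(x, y). x \<in> {1..k} \<and> y \<in> {1..k} \<and> x < y \<and> f y < f x}"

lemma finite_inversions [simp]: "finite (inversions k f)"
  by (rule finite_subset[of _ "{1..k} \<times> {1..k}"]) (auto simp: inversions_def)

lemma card_inversions_sig_comp:
  assumes f: "f permutes {1..k}" and j: "1 \<le> j" "j < k" and less: "inv f j < inv f (Suc j)"
  shows "card (inversions k (sig j \<circ> f)) = Suc (card (inversions k f))"
proof -
  define x0 y0 where "x0 = inv f j" and "y0 = inv f (Suc j)"
  have f0: "f x0 = j" "f y0 = Suc j"
    unfolding x0_def y0_def by (simp_all add: permutes_inverses[OF f])
  have in0: "x0 \<in> {1..k}" "y0 \<in> {1..k}"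
    using permutes_in_image[OF f, of x0] permutes_in_image[OF f, of y0] f0 j by auto
  have order_kept: "sig j (f y) < sig j (f x) \<longleftrightarrow> f y < f x"
    if "x < y" "(x, y) \<noteq> (x0, y0)" for x y
  proof -
    have "f x \<noteq> f y" "\<not> (f x = j \<and> f y = Suc j)" "\<not> (f y = j \<and> f x = Suc j)"
      using that less f0 permutes_inj[OF f] unfolding x0_def y0_def
      by (metis inj_eq less_irrefl, metis inj_eq, metis inj_eq less_asym)
    then show ?thesis by (auto simp: sig_def Transposition.transpose_def)
  qed
  have "inversions k (sig j \<circ> f) = insert (x0, y0) (inversions k f)"
  proof (rule set_eqI, clarify)
    fix x y
    show "(x, y) \<in> inversions k (sig j \<circ> f) \<longleftrightarrow> (x, y) \<in> insert (x0, y0) (inversions k f)"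
    proof (cases "(x, y) = (x0, y0)")
      case True
      then show ?thesis
        using less in0 f0 unfolding x0_def[symmetric] y0_def[symmetric]
        by (simp add: inversions_def sig_def)
    next
      case False
      then show ?thesis using order_kept[of x y] by (auto simp: inversions_def)
    qed
  qed
  moreover have "(x0, y0) \<notin> inversions k f"
    using f0 by (simp add: inversions_def)
  ultimately show ?thesis by simp
qed

lemma card_inversions_sig_comp_greater:
  assumes f: "f permutes {1..k}" and j: "1 \<le> j" "j < k" and greater: "inv f (Suc j) < inv f j"
  shows "card (inversions k f) = Suc (card (inversions k (sig j \<circ> f)))"
proof -
  have g: "sig j \<circ> f permutes {1..k}" using permutes_compose[OF f sig_permutes[OF j]] .
  have "inv (sig j \<circ> f) j < inv (sig j \<circ> f) (Suc j)"
    unfolding inv_sig_comp[OF f j] using greater by (simp add: sig_def)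
  from card_inversions_sig_comp[OF g j this] show ?thesis
    by (simp add: comp_assoc[symmetric] o_def)
qed

definition sig_word :: "nat list \<Rightarrow> nat \<Rightarrow> nat" where
  "sig_word xs = foldr (\<lambda>i f. sig i \<circ> f) xs id"

lemma sig_word_Nil [simp]: "sig_word [] = id"
  by (simp add: sig_word_def id_def)

lemma sig_word_Cons [simp]: "sig_word (j # xs) = sig j \<circ> sig_word xs"
  by (simp add: sig_word_def)

lemma card_inversions_sig_word_le:
  assumes "set xs \<subseteq> {1..<k}"
  shows "sig_word xs permutes {1..k} \<and> card (inversions k (sig_word xs)) \<le> length xs"
  using assms
proof (induction xs)
  case Nil
  have "inversions k id = {}" by (auto simp: inversions_def)
  then show ?case using permutes_id[of "{1..k}"] by (simp add: id_def)
next
  case (Cons j xs)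
  then have f: "sig_word xs permutes {1..k}" and j: "1 \<le> j" "j < k" by auto
  have step: "card (inversions k (sig j \<circ> sig_word xs)) \<le> Suc (card (inversions k (sig_word xs)))"
  proof (cases "inv (sig_word xs) j < inv (sig_word xs) (Suc j)")
    case True
    then show ?thesis using card_inversions_sig_comp[OF f j] by simp
  next
    case False
    with permutes_inv_Suc_neq[OF f, of j] have "inv (sig_word xs) (Suc j) < inv (sig_word xs) j" by linarith
    then show ?thesis using card_inversions_sig_comp_greater[OF f j] by simp
  qed
  show ?case
    unfolding sig_word_Cons length_Cons
  proof
    show "sig j \<circ> sig_word xs permutes {1..k}" using permutes_compose[OF f sig_permutes[OF j]] .
    show "card (inversions k (sig j \<circ> sig_word xs)) \<le> Suc (length xs)"
      using step Cons by auto
  qed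
qed

lemma permutes_increasing_eq_id:
  assumes g: "g permutes {1..k}" and inc: "\<And>j. 1 \<le> j \<Longrightarrow> j < k \<Longrightarrow> g j < g (Suc j)"
  shows "g = id"
proof
  fix m
  have ge: "m \<le> g m" if "m \<in> {1..k}" for m
    using that
  proof (induction m)
    case (Suc m)
    then show ?case
      using inc[of m] permutes_in_image[OF g, of 1] by (cases "m = 0") auto
  qed simp
  have "sum id {1..k} = sum g {1..k}"
    using sum.permute[OF g, of id] by simp
  then have "m \<in> {1..k} \<Longrightarrow> id m = g m"
    by (rule sum_mono_inv) (use ge in auto)
  then show "g m = id m"
    using permutes_not_in[OF g, of m] by fastforce
qed

lemma sig_word_exists:
  "f permutes {1..k} \<Longrightarrow>
     \<exists>xs. length xs = card (inversions k f) \<and> set xs \<subseteq> {1..<k} \<and> f = sig_word xs"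
proof (induction "card (inversions k f)" arbitrary: f rule: less_induct)
  case less
  show ?case
  proof (cases "\<exists>j. 1 \<le> j \<and> j < k \<and> inv f (Suc j) < inv f j")
    case False
    then have "inv f j < inv f (Suc j)" if "1 \<le> j" "j < k" for j
    proof -
      have "\<not> inv f (Suc j) < inv f j" using False that by blast
      with permutes_inv_Suc_neq[OF less.prems, of j] show ?thesis by linarith
    qed
    then have "inv f = id"
      using permutes_increasing_eq_id[OF permutes_inv[OF less.prems]] by blast
    then have "f = id" by (metis inv_id inv_inv_eq permutes_bij[OF less.prems])
    moreover have "inversions k id = {}" by (auto simp: inversions_def)
    ultimately show ?thesis by (intro exI[of _ "[]"]) simp
  next
    case True
    then obtain j where j: "1 \<le> j" "j < k" "inv f (Suc j) < inv f j" by blast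
    note less_card = card_inversions_sig_comp_greater[OF less.prems j]
    have "sig j \<circ> f permutes {1..k}" using permutes_compose[OF less.prems sig_permutes[OF j(1,2)]] .
    with less.hyps less_card obtain xs where
      xs: "length xs = card (inversions k (sig j \<circ> f))" "set xs \<subseteq> {1..<k}" "sig j \<circ> f = sig_word xs"
      by force
    have "sig_word (j # xs) = f"
      by (simp flip: xs(3) add: fun_eq_iff)
    then show ?thesis using xs less_card j by (intro exI[of _ "j # xs"]) auto
  qed
qed

lemma perm_length_eq_card_inversions:
  assumes "f permutes {1..k}"
  shows "perm_length k f = card (inversions k f)"
  unfolding perm_length_def sig_word_def[symmetric]
proof (rule Least_equality)
  show "\<exists>xs. length xs = card (inversions k f) \<and> set xs \<subseteq> {1..<k} \<and> f = sig_word xs"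
    using sig_word_exists[OF assms] .
next
  fix m assume "\<exists>xs. length xs = m \<and> set xs \<subseteq> {1..<k} \<and> f = sig_word xs"
  then show "card (inversions k f) \<le> m" using card_inversions_sig_word_le by blast
qed

declare sigma_plus.simps [simp del]

lemma sigma_plus_self [simp]: "sigma_plus r r = id"
  by (simp add: sigma_plus.simps)

lemma sigma_plus_Suc: "sigma_plus r (Suc (r + i)) = sigma_plus r (r + i) \<circ> sig (r + i)"
  by (subst sigma_plus.simps) simp

lemma inv_sigma_plus:
  "inv (sigma_plus r (r + i)) = (\<lambda>m. if m = r then r + i else if r < m \<and> m \<le> r + i then m - 1 else m)"
proof -
  have "sigma_plus r (r + i) m = (if m = r + i then r else if r \<le> m \<and> m < r + i then m + 1 else m)" for m
    by (induction i arbitrary: m) (auto simp: sigma_plus_Suc sig_def Transposition.transpose_def)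
  then show ?thesis by (intro inv_equality) auto
qed

lemma sigma_plus_permutes: "{r..r + i} \<subseteq> S \<Longrightarrow> sigma_plus r (r + i) permutes S"
proof (induction i)
  case (Suc i)
  have "sig (r + i) permutes S"
    unfolding sig_def using Suc.prems by (intro permutes_swap_id) auto
  moreover have "{r..r + i} \<subseteq> S" using Suc.prems by auto
  then have "sigma_plus r (r + i) permutes S" by (rule Suc.IH)
  ultimately show ?case unfolding add_Suc_right sigma_plus_Suc by (intro permutes_compose)
qed simp

lemma card_inversions_sigma_plus_comp:
  assumes "\<rho> permutes {1..k}" "1 \<le> r" "r + i \<le> k" "ordered_on r (r + i) \<rho>"
  shows "card (inversions k (sigma_plus r (r + i) \<circ> \<rho>)) = card (inversions k \<rho>) + i"
  using assms
proof (induction i arbitrary: \<rho>)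
  case (Suc i)
  define \<rho>' where "\<rho>' = sig (r + i) \<circ> \<rho>"
  have j: "1 \<le> r + i" "r + i < k" using Suc.prems by auto
  have perm': "\<rho>' permutes {1..k}"
    unfolding \<rho>'_def using permutes_compose[OF Suc.prems(1) sig_permutes[OF j]] .
  have card': "card (inversions k \<rho>') = Suc (card (inversions k \<rho>))"
    unfolding \<rho>'_def using Suc.prems(4)
    by (intro card_inversions_sig_comp[OF Suc.prems(1) j]) (simp add: ordered_on_def)
  have "ordered_on r (r + i) \<rho>'"
    using Suc.prems(4) unfolding ordered_on_def \<rho>'_def inv_sig_comp[OF Suc.prems(1) j]
    by (auto simp: sig_def Transposition.transpose_def)
  moreover have "sigma_plus r (r + Suc i) \<circ> \<rho> = sigma_plus r (r + i) \<circ> \<rho>'"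
    unfolding add_Suc_right sigma_plus_Suc \<rho>'_def by (simp add: o_assoc)
  ultimately show ?case using Suc.IH[OF perm' Suc.prems(2)] Suc.prems(3) card' by simp
qed simp

lemma perm_length_sigma_plus_comp:
  assumes "\<pi> permutes {1..k}" "1 \<le> r" "r + i \<le> k" "ordered_on r (r + i) \<pi>"
  shows "perm_length k (sigma_plus r (r + i) \<circ> \<pi>) = perm_length k \<pi> + i"
proof -
  have "sigma_plus r (r + i) permutes {1..k}"
    using assms(2,3) by (intro sigma_plus_permutes) auto
  then show ?thesis
    using card_inversions_sigma_plus_comp[OF assms] assms(1)
    by (simp add: perm_length_eq_card_inversions permutes_compose)
qed

section \<open>Summing out edge colours\<close>

definition extensions :: "nat \<Rightarrow> edge set \<Rightarrow> (edge \<Rightarrow> nat) \<Rightarrow> (edge \<Rightarrow> nat) set" where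
  "extensions n E c = {cfg. (\<forall>e. e \<notin> E \<longrightarrow> cfg e = c e) \<and> (\<forall>e\<in>E. cfg e \<le> n)}"

lemma extensions_empty [simp]: "extensions n {} c = {c}"
  by (auto simp: extensions_def)

lemma extensions_insert:
  assumes "e \<notin> E"
  shows "extensions n (insert e E) c = (\<Union>m\<le>n. extensions n E (c(e := m)))"
proof (intro equalityI subsetI)
  fix x assume x: "x \<in> extensions n (insert e E) c"
  then have "x \<in> extensions n E (c(e := x e))" and "x e \<le> n"
    using assms by (auto simp: extensions_def)
  then show "x \<in> (\<Union>m\<le>n. extensions n E (c(e := m)))" by blast
qed (use assms in \<open>auto simp: extensions_def\<close>)

lemma finite_extensions: "finite E \<Longrightarrow> finite (extensions n E c)"
  by (induction E arbitrary: c rule: finite_induct) (simp_all add: extensions_insert)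

lemma sum_extensions_insert:
  assumes "e \<notin> E" "finite E"
  shows "sum f (extensions n (insert e E) c) = (\<Sum>m\<le>n. sum f (extensions n E (c(e := m))))"
  unfolding extensions_insert[OF assms(1)]
proof (rule sum.UNION_disjoint)
  show "\<forall>m\<in>{..n}. finite (extensions n E (c(e := m)))"
    using finite_extensions[OF assms(2)] by blast
  show "\<forall>m\<in>{..n}. \<forall>m'\<in>{..n}. m \<noteq> m' \<longrightarrow> extensions n E (c(e := m)) \<inter> extensions n E (c(e := m')) = {}"
    using assms(1) by (auto simp: extensions_def)
qed simp

lemma sum_extensions_insert_inner:
  assumes "e \<notin> E" "finite E"
  shows "sum f (extensions n (insert e E) c) = (\<Sum>cfg\<in>extensions n E c. \<Sum>m\<le>n. f (cfg(e := m)))"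
proof -
  have "bij_betw (\<lambda>cfg. cfg(e := m)) (extensions n E c) (extensions n E (c(e := m)))" for m
  proof (rule bij_betw_byWitness[where f' = "\<lambda>cfg. cfg(e := c e)"])
  qed (use assms(1) in \<open>auto simp: extensions_def\<close>)
  then have "sum f (extensions n E (c(e := m))) = (\<Sum>cfg\<in>extensions n E c. f (cfg(e := m)))" for m
    by (rule sum.reindex_bij_betw[symmetric])
  then show ?thesis
    unfolding sum_extensions_insert[OF assms] by (simp only: sum.swap[of _ "{..n}"])
qed

definition vertex_weight :: "(int \<times> int \<Rightarrow> complex) \<Rightarrow> complex \<Rightarrow> (edge \<Rightarrow> nat) \<Rightarrow> int \<times> int \<Rightarrow> complex" where
  "vertex_weight spec q cfg v =
     R (spec v) q (cfg (VE (fst v) (snd v - 1))) (cfg (HE (fst v - 1) (snd v)))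
       (cfg (VE (fst v) (snd v))) (cfg (HE (fst v) (snd v)))"

definition out_edges :: "(int \<times> int) set \<Rightarrow> edge set" where
  "out_edges S = (\<Union>s\<in>S. {VE (fst s) (snd s), HE (fst s) (snd s)})"

lemma finite_out_edges: "finite S \<Longrightarrow> finite (out_edges S)"
  by (simp add: out_edges_def)

lemma out_edges_insert:
  "out_edges (insert v S) = insert (VE (fst v) (snd v)) (insert (HE (fst v) (snd v)) (out_edges S))"
  by (simp add: out_edges_def)

lemma out_edges_notin_out_edges:
  "v \<notin> S \<Longrightarrow> VE (fst v) (snd v) \<notin> insert (HE (fst v) (snd v)) (out_edges S)"
  "v \<notin> S \<Longrightarrow> HE (fst v) (snd v) \<notin> out_edges S"
  by (auto simp: out_edges_def prod_eq_iff)

lemma vertex_weight_cong: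
  "(\<And>e. e \<in> vertex_edges v \<Longrightarrow> cfg e = cfg' e) \<Longrightarrow> vertex_weight spec q cfg v = vertex_weight spec q cfg' v"
  by (simp add: vertex_weight_def vertex_edges_def)

lemma out_edges_notin_vertex_edges_below:
  assumes "fst s + snd s \<le> fst v + snd v" "s \<noteq> v"
  shows "VE (fst v) (snd v) \<notin> vertex_edges s" "HE (fst v) (snd v) \<notin> vertex_edges s"
  using assms by (auto simp: vertex_edges_def prod_eq_iff)

lemma sum_out_colours_prod_vertex_weight:
  assumes "finite S" "v \<notin> S" "\<And>s. s \<in> S \<Longrightarrow> fst s + snd s \<le> fst v + snd v" "spec v \<noteq> q"
    and "cfg (VE (fst v) (snd v - 1)) \<le> n" "cfg (HE (fst v - 1) (snd v)) \<le> n"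
  shows "(\<Sum>m2\<le>n. \<Sum>m1\<le>n. \<Prod>s\<in>insert v S.
            vertex_weight spec q (cfg(HE (fst v) (snd v) := m2, VE (fst v) (snd v) := m1)) s)
       = (\<Prod>s\<in>S. vertex_weight spec q cfg s)"
proof -
  let ?cfg = "\<lambda>m1 m2. cfg(HE (fst v) (snd v) := m2, VE (fst v) (snd v) := m1)"
  let ?R = "R (spec v) q (cfg (VE (fst v) (snd v - 1))) (cfg (HE (fst v - 1) (snd v)))"
  have other: "vertex_weight spec q (?cfg m1 m2) s = vertex_weight spec q cfg s" if "s \<in> S" for s m1 m2
    using out_edges_notin_vertex_edges_below[OF assms(3)[OF that]] that assms(2)
    by (intro vertex_weight_cong) auto
  have at_v: "vertex_weight spec q (?cfg m1 m2) v = ?R m1 m2" for m1 m2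
    by (simp add: vertex_weight_def)
  have "(\<Sum>m2\<le>n. \<Sum>m1\<le>n. \<Prod>s\<in>insert v S. vertex_weight spec q (?cfg m1 m2) s)
      = (\<Sum>m2\<le>n. \<Sum>m1\<le>n. ?R m1 m2 * (\<Prod>s\<in>S. vertex_weight spec q cfg s))"
    using assms(1,2) by (simp add: other at_v cong: prod.cong)
  also have "\<dots> = (\<Sum>m1\<le>n. \<Sum>m2\<le>n. ?R m1 m2) * (\<Prod>s\<in>S. vertex_weight spec q cfg s)"
    by (subst sum.swap) (simp only: sum_distrib_right)
  also have "\<dots> = (\<Prod>s\<in>S. vertex_weight spec q cfg s)"
    using R_stochastic[OF assms(4-6)] by simp
  finally show ?thesis .
qed

text \<open>The induction removes a vertex with maximal \<open>x + y\<close>: no other vertex of the set takes its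
  outgoing edges as input.\<close>

lemma sum_extensions_prod_vertex_weight:
  assumes "finite S" "\<forall>s\<in>S. spec s \<noteq> q"
    and "\<forall>s\<in>S. \<forall>e\<in>vertex_edges s. e \<notin> out_edges S \<longrightarrow> c e \<le> n"
  shows "(\<Sum>cfg\<in>extensions n (out_edges S) c. \<Prod>s\<in>S. vertex_weight spec q cfg s) = 1"
  using assms
proof (induction S arbitrary: c rule: finite_ranking_induct[where f = "\<lambda>s. fst s + snd s"])
  case (insert v S)
  show ?case
  proof (cases "v \<in> S")
    case True
    then show ?thesis using insert by (simp add: insert_absorb)
  next
    case False
    have IH: "(\<Sum>cfg\<in>extensions n (out_edges S) c. \<Prod>s\<in>S. vertex_weight spec q cfg s) = 1"
    proof (rule insert.IH)
      show "\<forall>s\<in>S. spec s \<noteq> q" using insert.prems(1) by simp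
      show "\<forall>s\<in>S. \<forall>e\<in>vertex_edges s. e \<notin> out_edges S \<longrightarrow> c e \<le> n"
        using insert.prems(2) out_edges_notin_vertex_edges_below[OF insert.hyps(2)] False
        by (fastforce simp: out_edges_insert)
    qed
    have in_edges_le: "cfg e \<le> n"
      if "cfg \<in> extensions n (out_edges S) c" "e \<in> {VE (fst v) (snd v - 1), HE (fst v - 1) (snd v)}" for cfg e
    proof (cases "e \<in> out_edges S")
      case True then show ?thesis using that(1) by (simp add: extensions_def)
    next
      case False
      then have "e \<notin> out_edges (insert v S)" using that(2) by (auto simp: out_edges_insert)
      then show ?thesis
        using that False insert.prems(2) by (auto simp: extensions_def vertex_edges_def)
    qed
    have "(\<Sum>cfg\<in>extensions n (out_edges (insert v S)) c. \<Prod>s\<in>insert v S. vertex_weight spec q cfg s)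
        = (\<Sum>cfg\<in>extensions n (out_edges S) c. \<Sum>m2\<le>n. \<Sum>m1\<le>n. \<Prod>s\<in>insert v S.
             vertex_weight spec q (cfg(HE (fst v) (snd v) := m2, VE (fst v) (snd v) := m1)) s)"
      unfolding out_edges_insert using out_edges_notin_out_edges[OF False] finite_out_edges[OF insert.hyps(1)]
      by (simp add: sum_extensions_insert_inner)
    also have "\<dots> = 1"
      using sum_out_colours_prod_vertex_weight[OF insert.hyps(1) False insert.hyps(2)] insert.prems(1)
        in_edges_le IH by simp
    finally show ?thesis .
  qed
qed (simp add: out_edges_def)

section \<open>Up-left paths and the height function\<close>

lemma finite_column: "finite {y. (x, y) \<in> set L}"
  by (rule finite_subset[of _ "snd ` set L"]) force+

lemma up_left_path_step:
  assumes "up_left_path L" "Suc j < length L"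
  shows "(fst (L ! Suc j) = fst (L ! j) - 1 \<and> snd (L ! Suc j) = snd (L ! j)) \<or>
         (fst (L ! Suc j) = fst (L ! j) \<and> snd (L ! Suc j) = snd (L ! j) + 1)"
  using assms unfolding up_left_path_def by blast

lemma up_left_path_mono:
  assumes "up_left_path L" "j \<le> j'" "j' < length L"
  shows "fst (L ! j') \<le> fst (L ! j) \<and> snd (L ! j) \<le> snd (L ! j') \<and>
         (fst (L ! j) - fst (L ! j')) + (snd (L ! j') - snd (L ! j)) = int (j' - j)"
  using assms(2,3)
proof (induction j' rule: dec_induct)
  case (step m)
  then show ?case using up_left_path_step[OF assms(1), of m] by auto
qed simp

locale path_column =
  fixes L :: "(int \<times> int) list" and a :: int
  assumes path: "up_left_path L" and right_of_last: "fst (last L) < a" and left_of_hd: "a \<le> fst (hd L)"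
begin

text \<open>The points of \<open>L\<close> in column \<open>a\<close> are \<open>L ! col_start, \<dots>, L ! col_end\<close>, going up.\<close>

definition col_end where "col_end = Max {j. j < length L \<and> a \<le> fst (L ! j)}"
definition col_start where "col_start = Min {j. j < length L \<and> fst (L ! j) \<le> a}"

lemma L_nonempty: "L \<noteq> []"
  using path unfolding up_left_path_def by simp

lemma col_end_props:
  "col_end < length L" "a \<le> fst (L ! col_end)" "\<And>j. j < length L \<Longrightarrow> a \<le> fst (L ! j) \<Longrightarrow> j \<le> col_end"
proof -
  have fin: "finite {j. j < length L \<and> a \<le> fst (L ! j)}" by simp
  have "0 \<in> {j. j < length L \<and> a \<le> fst (L ! j)}"
    using left_of_hd L_nonempty by (simp add: hd_conv_nth)
  then have "col_end \<in> {j. j < length L \<and> a \<le> fst (L ! j)}"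
    unfolding col_end_def using fin by (intro Max_in) auto
  then show "col_end < length L" "a \<le> fst (L ! col_end)" by auto
  show "\<And>j. j < length L \<Longrightarrow> a \<le> fst (L ! j) \<Longrightarrow> j \<le> col_end"
    unfolding col_end_def using fin by (intro Max_ge) auto
qed

lemma col_start_props:
  "col_start < length L" "fst (L ! col_start) \<le> a" "\<And>j. j < length L \<Longrightarrow> fst (L ! j) \<le> a \<Longrightarrow> col_start \<le> j"
proof -
  have fin: "finite {j. j < length L \<and> fst (L ! j) \<le> a}" by simp
  have "length L - 1 \<in> {j. j < length L \<and> fst (L ! j) \<le> a}"
    using right_of_last L_nonempty by (simp add: last_conv_nth)
  then have "col_start \<in> {j. j < length L \<and> fst (L ! j) \<le> a}"
    unfolding col_start_def using fin by (intro Min_in) auto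
  then show "col_start < length L" "fst (L ! col_start) \<le> a" by auto
  show "\<And>j. j < length L \<Longrightarrow> fst (L ! j) \<le> a \<Longrightarrow> col_start \<le> j"
    unfolding col_start_def using fin by (intro Min_le) auto
qed

lemma Suc_col_end_less: "Suc col_end < length L"
proof (rule ccontr)
  assume "\<not> Suc col_end < length L"
  then have "col_end = length L - 1" using col_end_props(1) by simp
  then show False using col_end_props(2) right_of_last L_nonempty by (simp add: last_conv_nth)
qed

lemma nth_col_end: "fst (L ! col_end) = a" and nth_Suc_col_end: "L ! Suc col_end = (a - 1, snd (L ! col_end))"
proof -
  have "fst (L ! Suc col_end) < a"
    using col_end_props(3)[OF Suc_col_end_less] by fastforce
  moreover note up_left_path_step[OF path Suc_col_end_less]
  ultimately show "fst (L ! col_end) = a" using col_end_props(2) by auto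
  with \<open>fst (L ! Suc col_end) < a\<close> up_left_path_step[OF path Suc_col_end_less]
  show "L ! Suc col_end = (a - 1, snd (L ! col_end))" by (cases "L ! Suc col_end") auto
qed

lemma nth_col_start: "fst (L ! col_start) = a"
proof (cases "col_start = 0")
  case True
  then show ?thesis using col_start_props(2) left_of_hd L_nonempty by (simp add: hd_conv_nth)
next
  case False
  then have "a < fst (L ! (col_start - 1))"
    using col_start_props(3)[of "col_start - 1"] col_start_props(1) by fastforce
  moreover have "fst (L ! (col_start - 1)) - 1 \<le> fst (L ! col_start)"
    using up_left_path_step[OF path, of "col_start - 1"] col_start_props(1) False by auto
  ultimately show ?thesis using col_start_props(2) by simp
qed

lemma col_start_le_col_end: "col_start \<le> col_end"
  using col_start_props(3)[OF col_end_props(1)] nth_col_end by simp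

lemma in_column_iff: "j < length L \<Longrightarrow> fst (L ! j) = a \<longleftrightarrow> col_start \<le> j \<and> j \<le> col_end"
  using col_start_props(3) col_end_props(3) col_end_props(1) nth_col_start nth_col_end
    up_left_path_mono[OF path, of col_start j] up_left_path_mono[OF path, of j col_end]
  by fastforce

lemma snd_nth_in_column: "col_start \<le> j \<Longrightarrow> j \<le> col_end \<Longrightarrow> snd (L ! j) = snd (L ! col_start) + int (j - col_start)"
  using up_left_path_mono[OF path, of col_start j] col_end_props(1) in_column_iff[of j] nth_col_start by auto

lemma col_hi_eq: "col_hi L a = snd (L ! col_end)"
  unfolding col_hi_def
proof (rule Max_eqI[OF finite_column])
  show "snd (L ! col_end) \<in> {y. (a, y) \<in> set L}"
    using col_end_props(1) nth_col_end by (metis mem_Collect_eq nth_mem prod.collapse)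
  fix y assume "y \<in> {y. (a, y) \<in> set L}"
  then obtain j where "j < length L" "L ! j = (a, y)" by (auto simp: in_set_conv_nth)
  then show "y \<le> snd (L ! col_end)"
    using col_end_props(3)[of j] up_left_path_mono[OF path, of j col_end] col_end_props(1) by auto
qed

lemma col_lo_eq: "col_lo L a = snd (L ! col_start)"
  unfolding col_lo_def
proof (rule Min_eqI[OF finite_column])
  show "snd (L ! col_start) \<in> {y. (a, y) \<in> set L}"
    using col_start_props(1) nth_col_start by (metis mem_Collect_eq nth_mem prod.collapse)
  fix y assume "y \<in> {y. (a, y) \<in> set L}"
  then obtain j where j: "j < length L" "L ! j = (a, y)" by (auto simp: in_set_conv_nth)
  then have "col_start \<le> j" using col_start_props(3)[of j] by auto
  then show "snd (L ! col_start) \<le> y" using up_left_path_mono[OF path, of col_start j] j by auto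
qed

lemma col_lo_left_eq: "col_lo L (a - 1) = col_hi L a"
  unfolding col_lo_def col_hi_eq
proof (rule Min_eqI[OF finite_column])
  show "snd (L ! col_end) \<in> {y. (a - 1, y) \<in> set L}"
    using Suc_col_end_less nth_Suc_col_end by (metis mem_Collect_eq nth_mem)
  fix y assume "y \<in> {y. (a - 1, y) \<in> set L}"
  then obtain j where j: "j < length L" "L ! j = (a - 1, y)" by (auto simp: in_set_conv_nth)
  then have "col_end < j"
    using up_left_path_mono[OF path, of j col_end] col_end_props(1) nth_col_end by fastforce
  then show "snd (L ! col_end) \<le> y"
    using up_left_path_mono[OF path, of "Suc col_end" j] j nth_Suc_col_end by auto
qed

lemma col_lo_le_col_hi: "col_lo L a \<le> col_hi L a"
  unfolding col_lo_eq col_hi_eq using up_left_path_mono[OF path col_start_le_col_end col_end_props(1)] by simp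

lemma col_hi_minus_col_lo: "col_hi L a - col_lo L a = int (col_end - col_start)"
  unfolding col_lo_eq col_hi_eq using snd_nth_in_column[OF col_start_le_col_end order.refl] by simp

lemma step_edge_in_column:
  assumes "col_start \<le> j" "j < col_end"
  shows "step_edge L j = HE a (col_lo L a + int (j - col_start) + 1)"
proof -
  have "fst (L ! j) = a" "fst (L ! Suc j) = a"
    using in_column_iff[of j] in_column_iff[of "Suc j"] assms col_end_props(1) by auto
  then have "snd (L ! Suc j) = snd (L ! j) + 1"
    using up_left_path_step[OF path, of j] assms col_end_props(1) by auto
  then show ?thesis
    unfolding step_edge_def col_lo_eq using snd_nth_in_column[of j] assms \<open>fst (L ! j) = a\<close> by auto
qed

lemma step_edge_col_end: "step_edge L col_end = VE a (col_hi L a)"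
  unfolding step_edge_def col_hi_eq using nth_Suc_col_end nth_col_end by simp

lemma snd_nth_le_col_hi: "j < length L \<Longrightarrow> a \<le> fst (L ! j) \<Longrightarrow> snd (L ! j) \<le> col_hi L a"
  unfolding col_hi_eq using col_end_props up_left_path_mono[OF path, of j col_end] by auto

end

lemma card_int_interval_filter:
  "card {y::int. lo \<le> y \<and> y < hi \<and> P y} = (\<Sum>y\<in>{lo..<hi}. of_bool (P y))"
proof -
  have "{y::int. lo \<le> y \<and> y < hi \<and> P y} = {lo..<hi} \<inter> {y. P y}" by auto
  then show ?thesis by simp
qed

lemma sum_int_interval_shift: "(\<Sum>y\<in>{lo..<lo + int N}. f y) = (\<Sum>i<N. f (lo + int i))"
proof (induction N)
  case (Suc N)
  have "{lo..<lo + int (Suc N)} = insert (lo + int N) {lo..<lo + int N}" by auto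
  then show ?case using Suc by (simp add: add.commute)
qed simp

lemma sum_telescope_int:
  fixes f g k :: "int \<Rightarrow> nat"
  assumes "\<And>y. h < y \<Longrightarrow> y \<le> h + int N \<Longrightarrow> f y + g (y - 1) = k y + g y"
  shows "(\<Sum>y\<in>{h..<h + int N}. f (y + 1)) + g h = (\<Sum>y\<in>{h..<h + int N}. k (y + 1)) + g (h + int N)"
  using assms
proof (induction N)
  case (Suc N)
  have split: "{h..<h + int (Suc N)} = insert (h + int N) {h..<h + int N}" by auto
  have "f (h + int N + 1) + g (h + int N) = k (h + int N + 1) + g (h + int N + 1)"
    using Suc.prems[of "h + int N + 1"] by simp
  with Suc show ?case unfolding split by (simp add: add_ac)
qed simp

lemma height_Suc_row:
  assumes "col_lo Q x \<le> y"
  shows "height Q bc cfg (x, y + 1) c = height Q bc cfg (x, y) c + exceeds c (cfg (HE x (y + 1)))"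
proof -
  have "{col_lo Q x..<y + 1} = insert y {col_lo Q x..<y}" using assms by auto
  then show ?thesis unfolding height_def fst_conv snd_conv card_int_interval_filter by simp
qed

lemma height_cong:
  assumes "\<And>y. col_lo Q (fst p) \<le> y \<Longrightarrow> y < snd p \<Longrightarrow> cfg (HE (fst p) (y + 1)) = cfg' (HE (fst p) (y + 1))"
  shows "height Q bc cfg p c = height Q bc cfg' p c"
  unfolding height_def using assms by (metis (no_types, lifting) Collect_cong)

context path_column
begin

lemma crossings_in_column:
  assumes boundary: "\<forall>j. Suc j < length L \<longrightarrow> cfg (step_edge L j) = bc j"
  shows "card {j. col_start \<le> j \<and> j \<le> col_end \<and> c < int (bc j)}
    = (\<Sum>y\<in>{col_lo L a..<col_hi L a}. exceeds c (cfg (HE a (y + 1)))) + exceeds c (cfg (VE a (col_hi L a)))"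
proof -
  define N where "N = col_end - col_start"
  have "{j. col_start \<le> j \<and> j \<le> col_end \<and> c < int (bc j)} = {col_start..col_end} \<inter> {j. c < int (bc j)}"
    by auto
  then have "card {j. col_start \<le> j \<and> j \<le> col_end \<and> c < int (bc j)}
      = (\<Sum>j\<in>{col_start..col_end}. exceeds c (bc j))" by simp
  also have "{col_start..col_end} = insert col_end {col_start..<col_start + N}"
    unfolding N_def using col_start_le_col_end by auto
  also have "(\<Sum>j\<in>insert col_end {col_start..<col_start + N}. exceeds c (bc j))
      = exceeds c (bc col_end) + (\<Sum>i<N. exceeds c (bc (col_start + i)))"
    using sum.shift_bounds_nat_ivl[of "\<lambda>j. exceeds c (bc j)" 0 col_start N]
    by (simp add: N_def atLeast0LessThan add.commute del: sum_of_bool_eq)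
  also have "bc col_end = cfg (VE a (col_hi L a))"
    using boundary Suc_col_end_less by (simp flip: step_edge_col_end)
  also have "(\<Sum>i<N. exceeds c (bc (col_start + i))) = (\<Sum>i<N. exceeds c (cfg (HE a (col_lo L a + int i + 1))))"
  proof (rule sum.cong[OF refl])
    fix i assume "i \<in> {..<N}"
    then have i: "col_start \<le> col_start + i" "col_start + i < col_end" unfolding N_def by auto
    then have "bc (col_start + i) = cfg (step_edge L (col_start + i))"
      using boundary Suc_col_end_less by simp
    then show "exceeds c (bc (col_start + i)) = exceeds c (cfg (HE a (col_lo L a + int i + 1)))"
      by (simp add: step_edge_in_column[OF i])
  qed
  also have "\<dots> = (\<Sum>y\<in>{col_lo L a..<col_hi L a}. exceeds c (cfg (HE a (y + 1))))"
    using col_hi_minus_col_lo sum_int_interval_shift[of "\<lambda>y. exceeds c (cfg (HE a (y + 1)))" "col_lo L a" N]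
    by (simp add: N_def algebra_simps)
  finally show ?thesis by simp
qed

lemma crossings_left_column:
  assumes boundary: "\<forall>j. Suc j < length L \<longrightarrow> cfg (step_edge L j) = bc j"
  shows "card {j. Suc j < length L \<and> a - 1 < fst (L ! j) \<and> c < int (bc j)}
    = card {j. Suc j < length L \<and> a < fst (L ! j) \<and> c < int (bc j)}
      + (\<Sum>y\<in>{col_lo L a..<col_hi L a}. exceeds c (cfg (HE a (y + 1)))) + exceeds c (cfg (VE a (col_hi L a)))"
proof -
  let ?right = "{j. Suc j < length L \<and> a < fst (L ! j) \<and> c < int (bc j)}"
  let ?column = "{j. col_start \<le> j \<and> j \<le> col_end \<and> c < int (bc j)}"
  have "{j. Suc j < length L \<and> a - 1 < fst (L ! j) \<and> c < int (bc j)} = ?right \<union> ?column"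
  proof (intro equalityI subsetI)
    fix j assume "j \<in> {j. Suc j < length L \<and> a - 1 < fst (L ! j) \<and> c < int (bc j)}"
    then show "j \<in> ?right \<union> ?column" using in_column_iff[of j] by auto
  next
    fix j assume "j \<in> ?right \<union> ?column"
    then show "j \<in> {j. Suc j < length L \<and> a - 1 < fst (L ! j) \<and> c < int (bc j)}"
      using in_column_iff[of j] Suc_col_end_less by auto
  qed
  moreover have "?right \<inter> ?column = {}"
  proof -
    have "fst (L ! j) = a" if "col_start \<le> j" "j \<le> col_end" for j
      using in_column_iff[of j] that col_end_props(1) by auto
    then show ?thesis by force
  qed
  moreover have "finite ?right" "finite ?column" by (auto intro: finite_subset[of _ "{..<length L}"])
  ultimately show ?thesis
    using crossings_in_column[OF boundary] by (simp add: card_Un_disjoint)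
qed

lemma height_left_column:
  assumes boundary: "\<forall>j. Suc j < length L \<longrightarrow> cfg (step_edge L j) = bc j"
    and below: "col_hi L a < b"
    and conservation: "\<And>y. col_hi L a < y \<Longrightarrow> y < b \<Longrightarrow>
      exceeds c (cfg (HE (a - 1) y)) + exceeds c (cfg (VE a (y - 1))) = exceeds c (cfg (HE a y)) + exceeds c (cfg (VE a y))"
  shows "height L bc cfg (a - 1, b - 1) c = height L bc cfg (a, b - 1) c + exceeds c (cfg (VE a (b - 1)))"
proof -
  define hi where "hi = col_hi L a"
  define M where "M = nat (b - 1 - hi)"
  have b: "b - 1 = hi + int M" unfolding M_def hi_def using below by simp
  have lo_hi: "col_lo L a \<le> hi" unfolding hi_def by (rule col_lo_le_col_hi)
  have "{col_lo L a..<b - 1} = {col_lo L a..<hi} \<union> {hi..<b - 1}" using b lo_hi by auto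
  then have split: "(\<Sum>y\<in>{col_lo L a..<b - 1}. exceeds c (cfg (HE a (y + 1))))
      = (\<Sum>y\<in>{col_lo L a..<hi}. exceeds c (cfg (HE a (y + 1)))) + (\<Sum>y\<in>{hi..<b - 1}. exceeds c (cfg (HE a (y + 1))))"
    by (simp only:) (rule sum.union_disjoint, auto)
  have telescope: "(\<Sum>y\<in>{hi..<hi + int M}. exceeds c (cfg (HE (a - 1) (y + 1)))) + exceeds c (cfg (VE a hi))
      = (\<Sum>y\<in>{hi..<hi + int M}. exceeds c (cfg (HE a (y + 1)))) + exceeds c (cfg (VE a (hi + int M)))"
    by (rule sum_telescope_int[where f = "\<lambda>y. exceeds c (cfg (HE (a - 1) y))"
          and k = "\<lambda>y. exceeds c (cfg (HE a y))" and g = "\<lambda>y. exceeds c (cfg (VE a y))"])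
       (use conservation b hi_def in auto)
  show ?thesis
    unfolding height_def fst_conv snd_conv card_int_interval_filter col_lo_left_eq
      crossings_left_column[OF boundary] split
    using telescope b hi_def by simp
qed

end

lemma finite_region_vertices: "finite (region_vertices P Q)"
proof -
  have "region_vertices P Q \<subseteq> (\<Union>x\<in>{fst (last Q)<..fst (hd Q)}. {x} \<times> {col_hi Q x<..col_hi P x})"
    unfolding region_vertices_def by auto
  then show ?thesis by (rule finite_subset) auto
qed

lemma finite_configs: "finite (configs n P Q bc)"
proof -
  have "finite {j. Suc j < length Q}"
    by (rule finite_subset[of _ "{..<length Q}"]) auto
  then have "finite {step_edge Q j | j. Suc j < length Q}"
    by (simp add: setcompr_eq_image)
  then have "finite (model_edges P Q)"
    unfolding model_edges_def using finite_region_vertices by (simp add: vertex_edges_def)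
  moreover have "configs n P Q bc \<subseteq> extensions n (model_edges P Q) (\<lambda>_. 0)"
    unfolding configs_def extensions_def by auto
  ultimately show ?thesis using finite_extensions finite_subset by blast
qed

lemma cfg_weight_eq_prod_vertex_weight:
  "cfg_weight q u w P Q cfg =
     (\<Prod>v\<in>region_vertices P Q. vertex_weight (\<lambda>v. u (snd v) / w (fst v)) (complex_of_real q) cfg v)"
  unfolding cfg_weight_def vertex_weight_def by simp

lemma in_edges_in_model_edges:
  "v \<in> region_vertices P Q \<Longrightarrow> vertex_edges v \<subseteq> model_edges P Q"
  unfolding model_edges_def by auto

lemma sum_weighted_sum_commute:
  fixes W :: "'a \<Rightarrow> 'b::comm_semiring_1"
  shows "(\<Sum>x\<in>X. W x * (\<Sum>i\<in>I. C * f i * g i x)) = (\<Sum>i\<in>I. C * f i * (\<Sum>x\<in>X. W x * g i x))"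
proof -
  have "(\<Sum>x\<in>X. W x * (\<Sum>i\<in>I. C * f i * g i x)) = (\<Sum>x\<in>X. \<Sum>i\<in>I. C * f i * (W x * g i x))"
    by (simp add: sum_distrib_left mult.left_commute)
  also have "\<dots> = (\<Sum>i\<in>I. \<Sum>x\<in>X. C * f i * (W x * g i x))"
    by (rule sum.swap)
  finally show ?thesis by (simp add: sum_distrib_left)
qed

locale block_at_vertex =
  fixes n :: nat and q :: real and u w :: "int \<Rightarrow> complex"
    and P Q :: "(int \<times> int) list" and bc :: "nat \<Rightarrow> nat"
    and k r t :: nat and A B c :: "nat \<Rightarrow> int" and \<pi> :: "nat \<Rightarrow> nat" and z :: complex
  assumes q_ne_1: "q \<noteq> 1"
    and path: "up_left_path Q"
    and spec_ne_q: "\<forall>v\<in>region_vertices P Q. u (snd v) / w (fst v) \<noteq> complex_of_real q"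
    and rt: "1 \<le> r" "1 \<le> t" "r + t - 1 \<le> k"
    and A_mono: "\<forall>i j. 1 \<le> i \<and> i \<le> j \<and> j \<le> k \<longrightarrow> A i \<le> A j"
    and A_eq: "\<forall>i. r \<le> i \<and> i \<le> r + t - 1 \<longrightarrow> A i = A r"
    and A_lt1: "1 < r \<longrightarrow> A (r - 1) < A r"
    and B_mono: "\<forall>i j. 1 \<le> i \<and> i \<le> j \<and> j \<le> k \<longrightarrow> B j \<le> B i"
    and B_eq: "\<forall>i. r \<le> i \<and> i \<le> r + t - 1 \<longrightarrow> B i = B r"
    and B_lt2: "r + t \<le> k \<longrightarrow> B (r + t) < B (r + t - 1)"
    and c_mono: "\<forall>i j. 1 \<le> i \<and> i \<le> j \<and> j \<le> k \<longrightarrow> c i \<le> c j"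
    and v: "(A r, B r) \<in> region_vertices P Q"
    and z: "z = u (B r) / w (A r)"
    and perm: "\<pi> permutes {1..k}"
    and ord: "ordered_on r (r + t - 1) \<pi>"
begin

abbreviation "qc \<equiv> complex_of_real q"

definition "a = A r"
definition "b = B r"
definition spec :: "int \<times> int \<Rightarrow> complex" where "spec v = u (snd v) / w (fst v)"
definition "d = perm_act \<pi> c"
definition "block_threshold i = d (r + i)"
definition "block = {r..<r + t}"
definition "outside = {1..k} - block"
definition "upper_right = {v \<in> region_vertices P Q. a \<le> fst v \<and> b \<le> snd v}"
definition "strict_upper_right = upper_right - {(a, b)}"
definition "free_edges = out_edges upper_right"
definition "rest_weight cfg = (\<Prod>v\<in>region_vertices P Q - upper_right. vertex_weight spec qc cfg v)"
definition "outside_height cfg = (\<Sum>m\<in>outside. height Q bc cfg (A m, B m) (d m))"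
definition "block_height cfg = (\<Sum>m\<in>block. height Q bc cfg (a, b - 1) (d m))"

lemma v_in_region: "fst (last Q) < a" "a \<le> fst (hd Q)" "col_hi Q a < b" "b \<le> col_hi P a"
  using v unfolding region_vertices_def a_def b_def by auto

sublocale column: path_column Q a
  using path v_in_region by unfold_locales auto

lemma z_ne_q: "z \<noteq> qc"
  using spec_ne_q v by (auto simp: z)

lemma block_subset: "block \<subseteq> {1..k}"
  unfolding block_def using rt by auto

lemma in_block: "m \<in> block \<Longrightarrow> A m = a \<and> B m = b"
  unfolding block_def a_def b_def using A_eq[rule_format, of m] B_eq[rule_format, of m] by auto

lemma in_outside: "m \<in> outside \<Longrightarrow> (A m < a \<or> B m < b) \<and> (m < r \<or> r + t \<le> m)"
proof -
  assume m: "m \<in> outside"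
  then have m1: "1 \<le> m" "m \<le> k" "m < r \<or> r + t \<le> m" unfolding outside_def block_def by auto
  show ?thesis
  proof (cases "m < r")
    case True
    moreover have "m \<le> r - 1" "r - 1 \<le> k" using True rt by auto
    ultimately have "A m \<le> A (r - 1)" "A (r - 1) < A r"
      using A_mono[rule_format, of m "r - 1"] m1 A_lt1 by auto
    then have "A m < a" unfolding a_def by linarith
    with True show ?thesis by simp
  next
    case False
    with m1 have "r + t \<le> m" by simp
    then have "B m \<le> B (r + t)" "B (r + t) < B (r + t - 1)" "B (r + t - 1) = B r"
      using B_mono[rule_format, of "r + t" m] m1 rt B_lt2 B_eq[rule_format, of "r + t - 1"] by auto
    then have "B m < b" unfolding b_def by linarith
    with \<open>r + t \<le> m\<close> show ?thesis by simp
  qed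
qed

lemma block_threshold_sorted: "i \<le> j \<Longrightarrow> j < t \<Longrightarrow> block_threshold i \<le> block_threshold j"
proof (cases "i = j")
  case False
  assume ij: "i \<le> j" "j < t"
  then have "inv \<pi> (r + i) < inv \<pi> (r + j)" using ord False unfolding ordered_on_def by auto
  moreover have "inv \<pi> (r + i) \<in> {1..k}" "inv \<pi> (r + j) \<in> {1..k}"
    using ij rt permutes_in_image[OF permutes_inv[OF perm]] by auto
  ultimately show ?thesis
    using c_mono[rule_format, of "inv \<pi> (r + i)" "inv \<pi> (r + j)"]
    unfolding block_threshold_def d_def perm_act_def by simp
qed simp

lemma free_edge_upper_right:
  "VE x y \<in> free_edges \<Longrightarrow> a \<le> x \<and> b \<le> y" "HE x y \<in> free_edges \<Longrightarrow> a \<le> x \<and> b \<le> y"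
  unfolding free_edges_def out_edges_def upper_right_def by auto

lemma free_edges_subset_model_edges: "free_edges \<subseteq> model_edges P Q"
  unfolding free_edges_def out_edges_def model_edges_def upper_right_def vertex_edges_def by auto

lemma step_edge_notin_free_edges: "Suc j < length Q \<Longrightarrow> step_edge Q j \<notin> free_edges"
proof
  assume j: "Suc j < length Q" and free: "step_edge Q j \<in> free_edges"
  show False
  proof (cases "snd (Q ! Suc j) = snd (Q ! j)")
    case True
    then have "a \<le> fst (Q ! j)" "b \<le> snd (Q ! j)"
      using free free_edge_upper_right(1) by (simp_all add: step_edge_def)
    then show False using column.snd_nth_le_col_hi[of j] j v_in_region(3) by simp
  next
    case False
    then have "a \<le> fst (Q ! j)" "b \<le> snd (Q ! j) + 1"
      using free free_edge_upper_right(2) by (simp_all add: step_edge_def)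
    moreover have "fst (Q ! Suc j) = fst (Q ! j)" "snd (Q ! Suc j) = snd (Q ! j) + 1"
      using up_left_path_step[OF path j] False by auto
    ultimately show False using column.snd_nth_le_col_hi[of "Suc j"] j v_in_region(3) by simp
  qed
qed

lemma rest_vertex_edges_not_free:
  "s \<in> region_vertices P Q - upper_right \<Longrightarrow> e \<in> vertex_edges s \<Longrightarrow> e \<notin> free_edges"
  unfolding upper_right_def vertex_edges_def
  using free_edge_upper_right(1)[of "fst s" "snd s - 1"] free_edge_upper_right(2)[of "fst s - 1" "snd s"]
    free_edge_upper_right(1)[of "fst s" "snd s"] free_edge_upper_right(2)[of "fst s" "snd s"]
  by auto

lemma height_free_edges_cong:
  assumes "\<forall>e. e \<notin> free_edges \<longrightarrow> cfg e = cfg' e" "x < a \<or> y < b"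
  shows "height Q bc cfg (x, y) e = height Q bc cfg' (x, y) e"
  using assms free_edge_upper_right(2) by (intro height_cong) force

lemma free_edges_cong:
  assumes "\<forall>e. e \<notin> free_edges \<longrightarrow> cfg e = cfg' e"
  shows "rest_weight cfg = rest_weight cfg'" "outside_height cfg = outside_height cfg'"
    "block_height cfg = block_height cfg'"
proof -
  show "rest_weight cfg = rest_weight cfg'"
    unfolding rest_weight_def using assms rest_vertex_edges_not_free
    by (intro prod.cong refl vertex_weight_cong) blast
  show "outside_height cfg = outside_height cfg'"
    unfolding outside_height_def using assms in_outside
    by (intro sum.cong refl height_free_edges_cong) auto
  show "block_height cfg = block_height cfg'"
    unfolding block_height_def using assms by (intro sum.cong refl height_free_edges_cong) auto
qed

lemma cfg_weight_split:
  "cfg_weight q u w P Q cfg = rest_weight cfg *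
     (vertex_weight spec qc cfg (a, b) * (\<Prod>s\<in>strict_upper_right. vertex_weight spec qc cfg s))"
proof -
  have ab: "(a, b) \<in> upper_right" unfolding upper_right_def using v a_def b_def by simp
  have fin: "finite upper_right" unfolding upper_right_def using finite_region_vertices by simp
  have "upper_right \<subseteq> region_vertices P Q" unfolding upper_right_def by auto
  then have "(\<Prod>s\<in>region_vertices P Q. vertex_weight spec qc cfg s)
      = rest_weight cfg * (\<Prod>s\<in>upper_right. vertex_weight spec qc cfg s)"
    unfolding rest_weight_def using finite_region_vertices by (rule prod.subset_diff)
  then have "cfg_weight q u w P Q cfg = rest_weight cfg * (\<Prod>s\<in>upper_right. vertex_weight spec qc cfg s)"
    unfolding cfg_weight_eq_prod_vertex_weight spec_def[abs_def] .
  then show ?thesis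
    using prod.remove[OF fin ab, of "vertex_weight spec qc cfg"] by (simp add: strict_upper_right_def)
qed

lemma colour_conservation_below:
  assumes "cfg_weight q u w P Q cfg \<noteq> 0" "col_hi Q a < y" "y < b"
  shows "exceeds e (cfg (HE (a - 1) y)) + exceeds e (cfg (VE a (y - 1)))
       = exceeds e (cfg (HE a y)) + exceeds e (cfg (VE a y))"
proof -
  have "(a, y) \<in> region_vertices P Q"
    unfolding region_vertices_def using v_in_region assms(2,3) by auto
  then have "vertex_weight spec qc cfg (a, y) \<noteq> 0"
    using assms(1) finite_region_vertices
    unfolding cfg_weight_eq_prod_vertex_weight spec_def[abs_def] by auto
  from R_conserves_colours_above[OF this[unfolded vertex_weight_def], of e] show ?thesis
    by simp
qed

lemma height_SW:
  assumes "cfg \<in> configs n P Q bc" "cfg_weight q u w P Q cfg \<noteq> 0"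
  shows "height Q bc cfg (a - 1, b - 1) e = height Q bc cfg (a, b - 1) e + exceeds e (cfg (VE a (b - 1)))"
  using assms(1) v_in_region(3) colour_conservation_below[OF assms(2)]
  by (intro column.height_left_column) (auto simp: configs_def)

lemma height_NE:
  "height Q bc cfg (a, b) e = height Q bc cfg (a, b - 1) e + exceeds e (cfg (HE a b))"
  using height_Suc_row[of Q a "b - 1"] column.col_lo_le_col_hi v_in_region(3) by simp

lemma height_NW:
  "height Q bc cfg (a - 1, b) e = height Q bc cfg (a - 1, b - 1) e + exceeds e (cfg (HE (a - 1) b))"
  using height_Suc_row[of Q "a - 1" "b - 1"] column.col_lo_left_eq v_in_region(3) by simp

lemma HH_eq_outside_plus_block:
  assumes "\<And>m. m \<in> outside \<Longrightarrow> A' m = A m \<and> B' m = B m \<and> d' m = d m"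
  shows "HH Q bc cfg k A' B' d' = outside_height cfg + (\<Sum>m\<in>block. height Q bc cfg (A' m, B' m) (d' m))"
proof -
  let ?h = "\<lambda>m. height Q bc cfg (A' m, B' m) (d' m)"
  have "HH Q bc cfg k A' B' d' = sum ?h outside + sum ?h block"
    unfolding HH_def outside_def using sum.subset_diff[OF block_subset, of ?h] by simp
  moreover have "sum ?h outside = outside_height cfg"
    unfolding outside_height_def using assms by (intro sum.cong) auto
  ultimately show ?thesis by simp
qed

lemma perm_act_sigma_plus:
  assumes "i < t"
  shows "perm_act (sigma_plus r (r + i) \<circ> \<pi>) c = d \<circ> inv (sigma_plus r (r + i))"
proof -
  have "sigma_plus r (r + i) permutes {1..k}"
    using assms rt by (intro sigma_plus_permutes) auto
  then have "inv (sigma_plus r (r + i) \<circ> \<pi>) = inv \<pi> \<circ> inv (sigma_plus r (r + i))"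
    using o_inv_distrib permutes_bij perm by blast
  then show ?thesis unfolding perm_act_def d_def by (simp add: fun_eq_iff)
qed

lemma HH_sigma_plus_block:
  assumes "i < t"
    and outside: "\<And>m. m \<in> outside \<Longrightarrow> A' m = A m \<and> B' m = B m"
    and others: "\<And>m. m \<in> block \<Longrightarrow> m \<noteq> r \<Longrightarrow> A' m = a \<and> B' m = b - 1"
  shows "HH Q bc cfg k A' B' (perm_act (sigma_plus r (r + i) \<circ> \<pi>) c) + height Q bc cfg (a, b - 1) (block_threshold i)
       = outside_height cfg + block_height cfg + height Q bc cfg (A' r, B' r) (block_threshold i)"
proof -
  let ?\<sigma> = "inv (sigma_plus r (r + i))"
  let ?g = "\<lambda>m. height Q bc cfg (a, b - 1) (d (?\<sigma> m))"
  have "?\<sigma> m = m" if "m \<in> outside" for m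
    using in_outside[OF that] assms(1) by (auto simp: inv_sigma_plus)
  then have HH: "HH Q bc cfg k A' B' (perm_act (sigma_plus r (r + i) \<circ> \<pi>) c)
      = outside_height cfg + (\<Sum>m\<in>block. height Q bc cfg (A' m, B' m) (d (?\<sigma> m)))"
    unfolding perm_act_sigma_plus[OF assms(1)] using outside
    by (subst HH_eq_outside_plus_block) simp_all
  have r: "r \<in> block" and fin: "finite block" unfolding block_def using rt by auto
  have "sigma_plus r (r + i) permutes block"
    using assms(1) unfolding block_def by (intro sigma_plus_permutes) auto
  then have "?\<sigma> permutes block" by (rule permutes_inv)
  then have "sum ?g block = block_height cfg"
    unfolding block_height_def using sum.permute[of ?\<sigma> block "\<lambda>m. height Q bc cfg (a, b - 1) (d m)"]
    by (simp add: o_def)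
  moreover have "?\<sigma> r = r + i" by (simp add: inv_sigma_plus)
  ultimately show ?thesis
    unfolding HH using sum.remove[OF fin r, of ?g]
      sum.remove[OF fin r, of "\<lambda>m. height Q bc cfg (A' m, B' m) (d (?\<sigma> m))"] others
    by (simp add: block_threshold_def)
qed

lemma ebox_outside: "m \<in> outside \<Longrightarrow> ebox r (r + t - 1) m = 0 \<and> ebox r r m = 0 \<and> ebox (r + 1) (r + t - 1) m = 0"
  using in_outside[of m] rt unfolding ebox_def by auto

lemma ebox_block: "m \<in> block \<Longrightarrow> ebox r (r + t - 1) m = 1 \<and> ebox r r m = of_bool (m = r)
    \<and> ebox (r + 1) (r + t - 1) m = of_bool (m \<noteq> r)"
  unfolding block_def ebox_def using rt by auto

lemma HH_block_at_face:
  "HH Q bc cfg k A B d = outside_height cfg + block_height cfg + count_below t block_threshold (cfg (HE a b))"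
proof -
  have "(\<Sum>m\<in>block. exceeds (d m) (cfg (HE a b))) = count_below t block_threshold (cfg (HE a b))"
  proof -
    have "(\<Sum>m\<in>block. exceeds (d m) (cfg (HE a b))) = (\<Sum>i<t. exceeds (block_threshold i) (cfg (HE a b)))"
      unfolding block_def block_threshold_def
      using sum.shift_bounds_nat_ivl[of "\<lambda>m. exceeds (d m) (cfg (HE a b))" 0 r t]
      by (simp add: atLeast0LessThan add.commute del: sum_of_bool_eq)
    also have "\<dots> = count_below t block_threshold (cfg (HE a b))"
      unfolding count_below_def by (simp add: Int_def lessThan_def conj_commute)
    finally show ?thesis .
  qed
  then show ?thesis
    by (subst HH_eq_outside_plus_block)
      (simp_all add: block_height_def in_block height_NE sum.distrib)
qed

lemma HH_block_down:
  "HH Q bc cfg k A (\<lambda>i. B i - ebox r (r + t - 1) i) d = outside_height cfg + block_height cfg"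
  using ebox_outside ebox_block in_block
  by (subst HH_eq_outside_plus_block) (auto simp: block_height_def intro!: sum.cong)

lemma HH_block_down_first_diagonal:
  assumes "cfg \<in> configs n P Q bc" "cfg_weight q u w P Q cfg \<noteq> 0" "i < t"
  shows "HH Q bc cfg k (\<lambda>j. A j - ebox r r j) (\<lambda>j. B j - ebox r (r + t - 1) j)
           (perm_act (sigma_plus r (r + i) \<circ> \<pi>) c)
       = outside_height cfg + block_height cfg + exceeds (block_threshold i) (cfg (VE a (b - 1)))"
proof -
  have "HH Q bc cfg k (\<lambda>j. A j - ebox r r j) (\<lambda>j. B j - ebox r (r + t - 1) j)
          (perm_act (sigma_plus r (r + i) \<circ> \<pi>) c) + height Q bc cfg (a, b - 1) (block_threshold i)
      = outside_height cfg + block_height cfg + height Q bc cfg (a - 1, b - 1) (block_threshold i)"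
    using ebox_outside ebox_block in_block rt
    by (subst HH_sigma_plus_block[OF assms(3)]) (auto simp: block_def)
  then show ?thesis using height_SW[OF assms(1,2)] by simp
qed

lemma HH_block_down_first_left:
  assumes "cfg \<in> configs n P Q bc" "cfg_weight q u w P Q cfg \<noteq> 0" "i < t"
  shows "HH Q bc cfg k (\<lambda>j. A j - ebox r r j) (\<lambda>j. B j - ebox (r + 1) (r + t - 1) j)
           (perm_act (sigma_plus r (r + i) \<circ> \<pi>) c)
       = outside_height cfg + block_height cfg
           + (exceeds (block_threshold i) (cfg (VE a (b - 1))) + exceeds (block_threshold i) (cfg (HE (a - 1) b)))"
proof -
  have "HH Q bc cfg k (\<lambda>j. A j - ebox r r j) (\<lambda>j. B j - ebox (r + 1) (r + t - 1) j)
          (perm_act (sigma_plus r (r + i) \<circ> \<pi>) c) + height Q bc cfg (a, b - 1) (block_threshold i)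
      = outside_height cfg + block_height cfg + height Q bc cfg (a - 1, b) (block_threshold i)"
    using ebox_outside ebox_block in_block rt
    by (subst HH_sigma_plus_block[OF assms(3)]) (auto simp: block_def)
  then show ?thesis using height_SW[OF assms(1,2)] height_NW by simp
qed

definition difference_integrand :: "(edge \<Rightarrow> nat) \<Rightarrow> complex" where
  "difference_integrand cfg =
     qc ^ perm_length k \<pi> * qc ^ HH Q bc cfg k A B (perm_act \<pi> c)
     - (qc - qc ^ t * z) / (qc - z) * qc ^ perm_length k \<pi>
         * qc ^ HH Q bc cfg k A (\<lambda>i. B i - ebox r (r + t - 1) i) (perm_act \<pi> c)
     - (\<Sum>i=0..t-1. (qc * z - 1) / (qc - z) * qc ^ perm_length k (sigma_plus r (r + i) \<circ> \<pi>)
         * qc ^ HH Q bc cfg k (\<lambda>j. A j - ebox r r j) (\<lambda>j. B j - ebox r (r + t - 1) j)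
             (perm_act (sigma_plus r (r + i) \<circ> \<pi>) c))
     - (\<Sum>i=0..t-1. (1 - z) / (qc - z) * qc ^ perm_length k (sigma_plus r (r + i) \<circ> \<pi>)
         * qc ^ HH Q bc cfg k (\<lambda>j. A j - ebox r r j) (\<lambda>j. B j - ebox (r + 1) (r + t - 1) j)
             (perm_act (sigma_plus r (r + i) \<circ> \<pi>) c))"

definition "height_factor cfg = qc ^ perm_length k \<pi> * qc ^ (outside_height cfg + block_height cfg)"

definition "defect_at_v cfg =
  vertex_defect qc z t block_threshold (cfg (VE a (b - 1))) (cfg (HE (a - 1) b)) (cfg (HE a b))"

lemma power_sigma_plus_term:
  assumes "m < t" "h = outside_height cfg + block_height cfg + e"
  shows "C * qc ^ perm_length k (sigma_plus r (r + m) \<circ> \<pi>) * qc ^ h = height_factor cfg * (C * (qc ^ m * qc ^ e))"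
proof -
  have "perm_length k (sigma_plus r (r + m) \<circ> \<pi>) = perm_length k \<pi> + m"
    using ord assms(1) rt by (intro perm_length_sigma_plus_comp[OF perm]) (auto simp: ordered_on_def)
  then show ?thesis using assms(2) by (simp add: height_factor_def power_add)
qed

lemma difference_integrand_eq:
  assumes "cfg \<in> configs n P Q bc" "cfg_weight q u w P Q cfg \<noteq> 0"
  shows "difference_integrand cfg = height_factor cfg * defect_at_v cfg"
proof -
  let ?i = "cfg (VE a (b - 1))" and ?j = "cfg (HE (a - 1) b)"
  have ivl: "{0..t-1} = {..<t}" using rt by auto
  have "difference_integrand cfg = height_factor cfg * qc ^ count_below t block_threshold (cfg (HE a b))
      - height_factor cfg * ((qc - qc ^ t * z) / (qc - z))
      - height_factor cfg * (\<Sum>m<t. (qc * z - 1) / (qc - z) * (qc ^ m * qc ^ exceeds (block_threshold m) ?i))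
      - height_factor cfg * (\<Sum>m<t. (1 - z) / (qc - z)
                                 * (qc ^ m * qc ^ (exceeds (block_threshold m) ?i + exceeds (block_threshold m) ?j)))"
    unfolding difference_integrand_def d_def[symmetric] HH_block_at_face HH_block_down ivl sum_distrib_left
    by (intro arg_cong2[where f = minus] sum.cong refl power_sigma_plus_term
        HH_block_down_first_diagonal[OF assms] HH_block_down_first_left[OF assms])
       (simp_all add: height_factor_def power_add)
  then show ?thesis
    unfolding vertex_defect_def defect_at_v_def by (simp add: algebra_simps)
qed

definition clear_free :: "(edge \<Rightarrow> nat) \<Rightarrow> edge \<Rightarrow> nat" where
  "clear_free cfg e = (if e \<in> free_edges then 0 else cfg e)"

lemma configs_fiber_eq_extensions:
  assumes cfg1: "cfg1 \<in> configs n P Q bc"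
  shows "{cfg \<in> configs n P Q bc. clear_free cfg = clear_free cfg1} = extensions n free_edges (clear_free cfg1)"
proof (intro equalityI subsetI)
  fix cfg assume "cfg \<in> {cfg \<in> configs n P Q bc. clear_free cfg = clear_free cfg1}"
  then have cfg: "cfg \<in> configs n P Q bc" and same: "clear_free cfg = clear_free cfg1" by auto
  have "cfg e = clear_free cfg1 e" if "e \<notin> free_edges" for e
    using fun_cong[OF same, of e] that by (simp add: clear_free_def)
  moreover have "cfg e \<le> n" if "e \<in> free_edges" for e
    using cfg that free_edges_subset_model_edges by (auto simp: configs_def)
  ultimately show "cfg \<in> extensions n free_edges (clear_free cfg1)"
    by (simp add: extensions_def)
next
  fix cfg assume cfg: "cfg \<in> extensions n free_edges (clear_free cfg1)"
  then have off: "\<And>e. e \<notin> free_edges \<Longrightarrow> cfg e = cfg1 e" and on: "\<And>e. e \<in> free_edges \<Longrightarrow> cfg e \<le> n"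
    by (simp_all add: extensions_def clear_free_def)
  have "cfg \<in> configs n P Q bc"
    unfolding configs_def
  proof (intro CollectI conjI allI impI ballI)
    fix e assume "e \<notin> model_edges P Q"
    then have "e \<notin> free_edges" using free_edges_subset_model_edges by auto
    then show "cfg e = 0" using off cfg1 \<open>e \<notin> model_edges P Q\<close> by (simp add: configs_def)
  next
    fix e assume "e \<in> model_edges P Q"
    then show "cfg e \<le> n" using off on cfg1 by (cases "e \<in> free_edges") (auto simp: configs_def)
  next
    fix j assume "Suc j < length Q"
    then show "cfg (step_edge Q j) = bc j"
      using off cfg1 step_edge_notin_free_edges by (simp add: configs_def)
  qed
  moreover have "clear_free cfg = clear_free cfg1"
    using off by (auto simp: clear_free_def)
  ultimately show "cfg \<in> {cfg \<in> configs n P Q bc. clear_free cfg = clear_free cfg1}" by simp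
qed

lemma free_edges_eq:
  "free_edges = insert (VE a b) (insert (HE a b) (out_edges strict_upper_right))"
proof -
  have "(a, b) \<in> upper_right" unfolding upper_right_def using v a_def b_def by simp
  then show ?thesis
    unfolding free_edges_def strict_upper_right_def using out_edges_insert[of "(a, b)" "upper_right - {(a, b)}"]
    by (simp add: insert_absorb)
qed

lemma strict_upper_right:
  "finite strict_upper_right" "(a, b) \<notin> strict_upper_right" "strict_upper_right \<subseteq> region_vertices P Q"
  unfolding strict_upper_right_def upper_right_def using finite_region_vertices by auto

lemma weight_on_fiber:
  assumes "cfg \<in> extensions n (out_edges strict_upper_right) (c0(VE a b := m1, HE a b := m2))"
  defines "i \<equiv> c0 (VE a (b - 1))" and "j \<equiv> c0 (HE (a - 1) b)"
  shows "cfg_weight q u w P Q cfg * (height_factor cfg * defect_at_v cfg)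
    = rest_weight c0 * height_factor c0 * (R z qc i j m1 m2 * vertex_defect qc z t block_threshold i j m2)
      * (\<Prod>s\<in>strict_upper_right. vertex_weight spec qc cfg s)"
proof -
  have agree: "\<forall>e. e \<notin> free_edges \<longrightarrow> cfg e = c0 e"
    using assms(1) unfolding free_edges_eq extensions_def by auto
  have "cfg (VE a b) = m1" "cfg (HE a b) = m2"
    using assms(1) out_edges_notin_out_edges[OF strict_upper_right(2)] unfolding extensions_def by auto
  moreover have "cfg (VE a (b - 1)) = i" "cfg (HE (a - 1) b) = j"
    using agree free_edge_upper_right unfolding i_def j_def by force+
  moreover have "spec (a, b) = z" unfolding spec_def z a_def b_def by simp
  ultimately have "vertex_weight spec qc cfg (a, b) = R z qc i j m1 m2"
    "defect_at_v cfg = vertex_defect qc z t block_threshold i j m2"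
    unfolding vertex_weight_def defect_at_v_def by simp_all
  then show ?thesis
    unfolding cfg_weight_split free_edges_cong(1)[OF agree]
    using free_edges_cong(2,3)[OF agree] by (simp add: height_factor_def algebra_simps)
qed

lemma sum_extensions_strict_upper_right:
  assumes "\<And>e. e \<in> model_edges P Q \<Longrightarrow> c0 e \<le> n" "m1 \<le> n" "m2 \<le> n"
  defines "i \<equiv> c0 (VE a (b - 1))" and "j \<equiv> c0 (HE (a - 1) b)"
  shows "(\<Sum>cfg\<in>extensions n (out_edges strict_upper_right) (c0(VE a b := m1, HE a b := m2)).
            cfg_weight q u w P Q cfg * (height_factor cfg * defect_at_v cfg))
       = rest_weight c0 * height_factor c0 * (R z qc i j m1 m2 * vertex_defect qc z t block_threshold i j m2)"
proof -
  let ?E = "extensions n (out_edges strict_upper_right) (c0(VE a b := m1, HE a b := m2))"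
  have "(\<Sum>cfg\<in>?E. \<Prod>s\<in>strict_upper_right. vertex_weight spec qc cfg s) = 1"
  proof (rule sum_extensions_prod_vertex_weight[OF strict_upper_right(1)])
    show "\<forall>s\<in>strict_upper_right. spec s \<noteq> qc"
      using spec_ne_q strict_upper_right(3) unfolding spec_def by auto
    show "\<forall>s\<in>strict_upper_right. \<forall>e\<in>vertex_edges s.
            e \<notin> out_edges strict_upper_right \<longrightarrow> (c0(VE a b := m1, HE a b := m2)) e \<le> n"
      using assms(1-3) in_edges_in_model_edges strict_upper_right(3) by fastforce
  qed
  moreover have "(\<Sum>cfg\<in>?E. cfg_weight q u w P Q cfg * (height_factor cfg * defect_at_v cfg))
      = rest_weight c0 * height_factor c0 * (R z qc i j m1 m2 * vertex_defect qc z t block_threshold i j m2)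
        * (\<Sum>cfg\<in>?E. \<Prod>s\<in>strict_upper_right. vertex_weight spec qc cfg s)"
    unfolding sum_distrib_left i_def j_def by (rule sum.cong[OF refl]) (rule weight_on_fiber)
  ultimately show ?thesis by simp
qed

lemma sum_fiber_vanishes:
  assumes "cfg1 \<in> configs n P Q bc"
  shows "(\<Sum>cfg\<in>extensions n free_edges (clear_free cfg1).
            cfg_weight q u w P Q cfg * (height_factor cfg * defect_at_v cfg)) = 0"
proof -
  define c0 where "c0 = clear_free cfg1"
  let ?i = "c0 (VE a (b - 1))" and ?j = "c0 (HE (a - 1) b)"
  have c0_le: "c0 e \<le> n" if "e \<in> model_edges P Q" for e
    using assms that by (simp add: c0_def clear_free_def configs_def)
  have "vertex_edges (a, b) \<subseteq> model_edges P Q"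
    using in_edges_in_model_edges v by (simp add: a_def b_def)
  then have ij: "?i \<le> n" "?j \<le> n"
    using c0_le by (auto simp: vertex_edges_def)
  have "(\<Sum>cfg\<in>extensions n free_edges c0. cfg_weight q u w P Q cfg * (height_factor cfg * defect_at_v cfg))
      = (\<Sum>m1\<le>n. \<Sum>m2\<le>n. \<Sum>cfg\<in>extensions n (out_edges strict_upper_right) (c0(VE a b := m1, HE a b := m2)).
           cfg_weight q u w P Q cfg * (height_factor cfg * defect_at_v cfg))"
    unfolding free_edges_eq
    using out_edges_notin_out_edges[OF strict_upper_right(2)] finite_out_edges[OF strict_upper_right(1)]
    by (simp add: sum_extensions_insert)
  also have "\<dots> = rest_weight c0 * height_factor c0
      * (\<Sum>m1\<le>n. \<Sum>m2\<le>n. R z qc ?i ?j m1 m2 * vertex_defect qc z t block_threshold ?i ?j m2)"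
    by (simp add: sum_extensions_strict_upper_right[OF c0_le] sum_distrib_left)
  also have "\<dots> = 0"
    using sum_R_vertex_defect[OF block_threshold_sorted z_ne_q _ ij] q_ne_1 by simp
  finally show ?thesis unfolding c0_def .
qed

lemma sum_weight_difference_integrand: "(\<Sum>cfg\<in>configs n P Q bc. cfg_weight q u w P Q cfg * difference_integrand cfg) = 0"
proof -
  let ?G = "\<lambda>cfg. cfg_weight q u w P Q cfg * (height_factor cfg * defect_at_v cfg)"
  have "(\<Sum>cfg\<in>configs n P Q bc. cfg_weight q u w P Q cfg * difference_integrand cfg) = (\<Sum>cfg\<in>configs n P Q bc. ?G cfg)"
    by (intro sum.cong refl) (metis difference_integrand_eq mult_zero_left)
  also have "\<dots> = (\<Sum>c0\<in>clear_free ` configs n P Q bc.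
                     \<Sum>cfg\<in>{cfg \<in> configs n P Q bc. clear_free cfg = c0}. ?G cfg)"
    by (rule sum.group[symmetric]) (simp_all add: finite_configs)
  also have "\<dots> = 0"
    using configs_fiber_eq_extensions sum_fiber_vanishes by (intro sum.neutral) auto
  finally show ?thesis .
qed

theorem height_expectation_identity:
  "qc ^ perm_length k \<pi> * EqH n q u w P Q bc k A B (perm_act \<pi> c) =
     (qc - qc ^ t * z) / (qc - z) * qc ^ perm_length k \<pi>
       * EqH n q u w P Q bc k A (\<lambda>i. B i - ebox r (r + t - 1) i) (perm_act \<pi> c)
   + (\<Sum>i=0..t-1. (qc * z - 1) / (qc - z) * qc ^ perm_length k (sigma_plus r (r + i) \<circ> \<pi>)
       * EqH n q u w P Q bc k (\<lambda>j. A j - ebox r r j) (\<lambda>j. B j - ebox r (r + t - 1) j)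
           (perm_act (sigma_plus r (r + i) \<circ> \<pi>) c))
   + (\<Sum>i=0..t-1. (1 - z) / (qc - z) * qc ^ perm_length k (sigma_plus r (r + i) \<circ> \<pi>)
       * EqH n q u w P Q bc k (\<lambda>j. A j - ebox r r j) (\<lambda>j. B j - ebox (r + 1) (r + t - 1) j)
           (perm_act (sigma_plus r (r + i) \<circ> \<pi>) c))"
  (is "?lhs = ?rhs1 + ?rhs2 + ?rhs3")
proof -
  let ?W = "cfg_weight q u w P Q"
  have "(\<Sum>cfg\<in>configs n P Q bc. ?W cfg * difference_integrand cfg) = ?lhs - ?rhs1 - ?rhs2 - ?rhs3"
    unfolding difference_integrand_def right_diff_distrib sum_subtractf sum_weighted_sum_commute
    unfolding EqH_def sc6v_expect_def sum_distrib_left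
    by (simp only: mult.left_commute)
  then have "?lhs - (?rhs1 + ?rhs2 + ?rhs3) = 0"
    unfolding sum_weight_difference_integrand diff_diff_eq by simp
  then show ?thesis by (simp only: right_minus_eq)
qed

end

theorem proposition5p3:
  fixes n :: nat and q :: real and u w :: "int \<Rightarrow> complex"
    and P Q :: "(int \<times> int) list" and bc :: "nat \<Rightarrow> nat"
    and k r t :: nat and A B c :: "nat \<Rightarrow> int" and \<pi> :: "nat \<Rightarrow> nat" and z :: complex
  assumes q: "0 < q" "q < 1"
    and dom: "skew_domain P Q"
    and bc_mono: "\<forall>i j. i \<le> j \<and> Suc j < length Q \<longrightarrow> bc i \<le> bc j"
    and bc_le: "\<forall>j. Suc j < length Q \<longrightarrow> bc j \<le> n"
    and rap: "\<forall>v\<in>region_vertices P Q. w (fst v) \<noteq> 0 \<and> u (snd v) / w (fst v) \<noteq> complex_of_real q"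
    and rt: "1 \<le> r" "1 \<le> t" "r + t - 1 \<le> k"
    and A_mono: "\<forall>i j. 1 \<le> i \<and> i \<le> j \<and> j \<le> k \<longrightarrow> A i \<le> A j"
    and A_eq: "\<forall>i. r \<le> i \<and> i \<le> r + t - 1 \<longrightarrow> A i = A r"
    and A_lt1: "1 < r \<longrightarrow> A (r - 1) < A r"
    and A_lt2: "r + t \<le> k \<longrightarrow> A (r + t - 1) < A (r + t)"
    and B_mono: "\<forall>i j. 1 \<le> i \<and> i \<le> j \<and> j \<le> k \<longrightarrow> B j \<le> B i"
    and B_eq: "\<forall>i. r \<le> i \<and> i \<le> r + t - 1 \<longrightarrow> B i = B r"
    and B_lt1: "1 < r \<longrightarrow> B r < B (r - 1)"
    and B_lt2: "r + t \<le> k \<longrightarrow> B (r + t) < B (r + t - 1)"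
    and c_mono: "\<forall>i j. 1 \<le> i \<and> i \<le> j \<and> j \<le> k \<longrightarrow> c i \<le> c j"
    and pts: "\<forall>i. 1 \<le> i \<and> i \<le> k \<longrightarrow> (A i, B i) \<in> region_faces P Q"
    and v: "(A r, B r) \<in> region_vertices P Q"
    and z: "z = u (B r) / w (A r)"
    and perm: "\<pi> permutes {1..k}"
    and ord: "ordered_on r (r + t - 1) \<pi>"
  shows
    "complex_of_real q ^ perm_length k \<pi> * EqH n q u w P Q bc k A B (perm_act \<pi> c) =
       (complex_of_real q - complex_of_real q ^ t * z) / (complex_of_real q - z)
         * complex_of_real q ^ perm_length k \<pi>
         * EqH n q u w P Q bc k A (\<lambda>i. B i - ebox r (r + t - 1) i) (perm_act \<pi> c)
     + (\<Sum>i=0..t-1. (complex_of_real q * z - 1) / (complex_of_real q - z)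
         * complex_of_real q ^ perm_length k (sigma_plus r (r + i) \<circ> \<pi>)
         * EqH n q u w P Q bc k (\<lambda>j. A j - ebox r r j) (\<lambda>j. B j - ebox r (r + t - 1) j)
             (perm_act (sigma_plus r (r + i) \<circ> \<pi>) c))
     + (\<Sum>i=0..t-1. (1 - z) / (complex_of_real q - z)
         * complex_of_real q ^ perm_length k (sigma_plus r (r + i) \<circ> \<pi>)
         * EqH n q u w P Q bc k (\<lambda>j. A j - ebox r r j) (\<lambda>j. B j - ebox (r + 1) (r + t - 1) j)
             (perm_act (sigma_plus r (r + i) \<circ> \<pi>) c))"
proof -
  have "block_at_vertex q u w P Q k r t A B c \<pi> z"
  proof unfold_locales
    show "q \<noteq> 1" using q by simp
    show "up_left_path Q" using dom by (simp add: skew_domain_def)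
    show "\<forall>v\<in>region_vertices P Q. u (snd v) / w (fst v) \<noteq> complex_of_real q" using rap by blast
  qed (fact assms)+
  then show ?thesis by (rule block_at_vertex.height_expectation_identity)
qed

end
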